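(* Let $G=(V,E)$ be a Cayley graph of a finitely generated group. There are positive constants $\alpha_D,\beta_D,\gamma_D,\alpha_N,\gamma_N$ (depending on $G$) such that: (i) for every finite connected subgraph $G'$ of $G$, $$\lambda^A(G')\ge\frac{\alpha_D}{\phi(\beta_D|G'|)^2}\quad\text{and}\quad \lambda^N(G')\ge\frac{\alpha_N}{|G'|^2}$$ (the latter whenever $\Delta^N(G')$ has a non-zero eigenvalue); (ii) for every positive integer $n$, $$\lambda^D(B(n))\le\frac{\gamma_D V(n)}{n^2\,V(\lfloor n/2\rfloor)}\quad\text{and}\quad\lambda^N(L_n)\le\frac{\gamma_N}{n^2},$$ where $L_n$ is any subgraph of $G$ which is a path (linear graph) with $n$ vertices.
   Context: $G$ is the Cayley graph with respect to a finite symmetric generating set $S$ not containing the identity $\iota$; $k=|S|$. $B(n)$ is the ball of radius $n$ around $\iota$ (regarded as the induced subgraph on these vertices), $V(n)=|B(n)|$, and $\phi(t)=\min\{n\ge0: V(n)>t\}$. For a subgraph $G'=(V',E')$, $|G'|$ is its number of vertices, $d_{G'}(x)$ its degrees, and on $\ell^2(V')$: $(D(G')\varphi)(x)=d_{G'}(x)\varphi(x)$, $(A(G')\varphi)(x)=\sum_{y\in V',y\sim_{G'}x}\varphi(y)$, $\Delta^A(G')=k\,\mathrm{Id}-A(G')$, $\Delta^D(G')=2k\,\mathrm{Id}-D(G')-A(G')$, $\Delta^N(G')=D(G')-A(G')$. For finite $G'$, $\lambda^{\#}(G')$ is the lowest non-zero eigenvalue of $\Delta^{\#}(G')$. *)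

theory Defs
  imports Complex_Main "HOL-Algebra.Algebra"
begin

definition cay_edge :: "('a, 'b) monoid_scheme \<Rightarrow> 'a set \<Rightarrow> 'a \<Rightarrow> 'a \<Rightarrow> bool" where
  "cay_edge G S x y \<longleftrightarrow> x \<in> carrier G \<and> y \<in> carrier G \<and> (\<exists>s\<in>S. y = x \<otimes>\<^bsub>G\<^esub> s)"

definition word_prod :: "('a, 'b) monoid_scheme \<Rightarrow> 'a list \<Rightarrow> 'a" where
  "word_prod G ws = foldr (\<lambda>s x. s \<otimes>\<^bsub>G\<^esub> x) ws \<one>\<^bsub>G\<^esub>"

definition cay_ball :: "('a, 'b) monoid_scheme \<Rightarrow> 'a set \<Rightarrow> nat \<Rightarrow> 'a set" where
  "cay_ball G S n = {word_prod G ws | ws. set ws \<subseteq> S \<and> length ws \<le> n}"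

definition induced_edges :: "('a, 'b) monoid_scheme \<Rightarrow> 'a set \<Rightarrow> 'a set \<Rightarrow> ('a \<times> 'a) set" where
  "induced_edges G S W = {(x, y). x \<in> W \<and> y \<in> W \<and> cay_edge G S x y}"

definition ball_vol :: "('a, 'b) monoid_scheme \<Rightarrow> 'a set \<Rightarrow> nat \<Rightarrow> nat" where
  "ball_vol G S n = card (cay_ball G S n)"

definition growth_inv :: "('a, 'b) monoid_scheme \<Rightarrow> 'a set \<Rightarrow> real \<Rightarrow> nat" where
  "growth_inv G S t = (LEAST n. real (ball_vol G S n) > t)"

definition is_subgraph :: "('a, 'b) monoid_scheme \<Rightarrow> 'a set \<Rightarrow> 'a set \<Rightarrow> ('a \<times> 'a) set \<Rightarrow> bool" where
  "is_subgraph G S V' E' \<longleftrightarrow> V' \<subseteq> carrier G \<and> E' \<subseteq> V' \<times> V' \<and>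
     (\<forall>(x, y) \<in> E'. cay_edge G S x y) \<and> (\<forall>(x, y) \<in> E'. (y, x) \<in> E')"

definition graph_connected :: "'a set \<Rightarrow> ('a \<times> 'a) set \<Rightarrow> bool" where
  "graph_connected V' E' \<longleftrightarrow> V' \<noteq> {} \<and> (\<forall>x\<in>V'. \<forall>y\<in>V'. (x, y) \<in> E'\<^sup>*)"

definition is_path_graph :: "'a set \<Rightarrow> ('a \<times> 'a) set \<Rightarrow> nat \<Rightarrow> bool" where
  "is_path_graph V' E' n \<longleftrightarrow> (\<exists>xs. distinct xs \<and> length xs = n \<and> V' = set xs \<and>
     E' = {(xs ! i, xs ! Suc i) | i. Suc i < n} \<union> {(xs ! Suc i, xs ! i) | i. Suc i < n})"

definition gdeg :: "('a \<times> 'a) set \<Rightarrow> 'a \<Rightarrow> nat" where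
  "gdeg E' x = card {y. (x, y) \<in> E'}"

definition adj_op :: "'a set \<Rightarrow> ('a \<times> 'a) set \<Rightarrow> ('a \<Rightarrow> real) \<Rightarrow> 'a \<Rightarrow> real" where
  "adj_op V' E' f x = (\<Sum>y \<in> {y \<in> V'. (x, y) \<in> E'}. f y)"

definition lap_A :: "nat \<Rightarrow> 'a set \<Rightarrow> ('a \<times> 'a) set \<Rightarrow> ('a \<Rightarrow> real) \<Rightarrow> 'a \<Rightarrow> real" where
  "lap_A k V' E' f x = real k * f x - adj_op V' E' f x"

definition lap_D :: "nat \<Rightarrow> 'a set \<Rightarrow> ('a \<times> 'a) set \<Rightarrow> ('a \<Rightarrow> real) \<Rightarrow> 'a \<Rightarrow> real" where
  "lap_D k V' E' f x = 2 * real k * f x - real (gdeg E' x) * f x - adj_op V' E' f x"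

definition lap_N :: "'a set \<Rightarrow> ('a \<times> 'a) set \<Rightarrow> ('a \<Rightarrow> real) \<Rightarrow> 'a \<Rightarrow> real" where
  "lap_N V' E' f x = real (gdeg E' x) * f x - adj_op V' E' f x"

definition is_eigenvalue :: "'a set \<Rightarrow> (('a \<Rightarrow> real) \<Rightarrow> 'a \<Rightarrow> real) \<Rightarrow> real \<Rightarrow> bool" where
  "is_eigenvalue V' L \<mu> \<longleftrightarrow> (\<exists>f. (\<exists>x\<in>V'. f x \<noteq> 0) \<and> (\<forall>x\<in>V'. L f x = \<mu> * f x))"

definition lowest_nz_eig :: "'a set \<Rightarrow> (('a \<Rightarrow> real) \<Rightarrow> 'a \<Rightarrow> real) \<Rightarrow> real" where
  "lowest_nz_eig V' L = Min {\<mu>. is_eigenvalue V' L \<mu> \<and> \<mu> \<noteq> 0}"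

end

theory Submission
  imports Defs "HOL-Analysis.Analysis" "HOL-Library.Transitive_Closure_Table"
begin

text \<open>
  Each of \<open>\<Delta>\<^sup>A\<close>, \<open>\<Delta>\<^sup>D\<close>, \<open>\<Delta>\<^sup>N\<close> has the form \<open>L\<^sub>w f x = w x \<cdot> f x - \<Sum>\<^sub>y\<^sub>~\<^sub>x f y\<close> for a weight \<open>w\<close>
  and is self-adjoint on \<open>l\<^sup>2(V')\<close>, so it has finitely many eigenvalues, and the least one (the
  least one on the complement of the constants, when \<open>L\<^sub>w 1 = 0\<close>) is the minimum of the Rayleigh
  quotient \<open>\<langle>f, L\<^sub>w f\<rangle> / \<parallel>f\<parallel>\<^sup>2\<close>, which is attained by compactness.

  On a connected graph, joining two vertices by a simple walk and applying
  Cauchy--Schwarz gives the Poincare inequality \<open>\<parallel>f\<parallel>\<^sup>2 \<le> |V'|\<^sup>2 \<langle>f, \<Delta>\<^sup>N f\<rangle>\<close> for \<open>f \<perp> 1\<close>.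
  For \<open>\<Delta>\<^sup>A\<close> compare \<open>f\<close>, extended by zero, with its right translates \<open>f(\<cdot> g)\<close> for \<open>g \<in> B(r)\<close>:
  writing \<open>g\<close> as a word of length at most \<open>r\<close> bounds \<open>\<parallel>f - f(\<cdot> g)\<parallel>\<^sup>2\<close> by \<open>4 r\<^sup>2 \<langle>f, \<Delta>\<^sup>A f\<rangle>\<close>,
  while its average over \<open>g\<close> is at least \<open>\<parallel>f\<parallel>\<^sup>2\<close> as soon as \<open>V(r) \<ge> 2|V'|\<close>; take
  \<open>r = \<phi>(2|V'|)\<close>.

  Upper bounds come from test functions: \<open>n - |x|\<close> on \<open>B(n)\<close>, which is at least \<open>n/2\<close> on
  \<open>B(\<lfloor>n/2\<rfloor>)\<close> and changes by at most one along edges, and the centred position on a path. Since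
  \<open>\<langle>f, \<Delta>\<^sup>D f\<rangle> \<ge> \<langle>f, \<Delta>\<^sup>A f\<rangle>\<close>, \<open>\<Delta>\<^sup>D\<close> is positive definite on a ball, so its least eigenvalue is
  the lowest non-zero one. The constants are \<open>\<alpha>\<^sub>D = 1/4\<close>, \<open>\<beta>\<^sub>D = 2\<close>, \<open>\<gamma>\<^sub>D = 2k\<close>, \<open>\<alpha>\<^sub>N = 1\<close>,
  \<open>\<gamma>\<^sub>N = 12\<close>.
\<close>

section \<open>Functions on a finite set\<close>

definition l2_inner :: "'a set \<Rightarrow> ('a \<Rightarrow> real) \<Rightarrow> ('a \<Rightarrow> real) \<Rightarrow> real" where
  "l2_inner V f g = (\<Sum>x\<in>V. f x * g x)"

lemma l2_inner_commute: "l2_inner V f g = l2_inner V g f"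
  unfolding l2_inner_def by (simp add: mult.commute)

lemma l2_inner_cong:
  "(\<And>x. x \<in> V \<Longrightarrow> f x = f' x) \<Longrightarrow> (\<And>x. x \<in> V \<Longrightarrow> g x = g' x) \<Longrightarrow>
    l2_inner V f g = l2_inner V f' g'"
  unfolding l2_inner_def by (rule sum.cong) simp_all

lemma l2_inner_scale_left: "l2_inner V (\<lambda>x. a * f x) g = a * l2_inner V f g"
  unfolding l2_inner_def by (simp add: sum_distrib_left mult.assoc)

lemma l2_inner_scale_right: "l2_inner V f (\<lambda>x. a * g x) = a * l2_inner V f g"
  unfolding l2_inner_def by (simp add: sum_distrib_left mult.left_commute)

lemma l2_inner_add_right: "l2_inner V f (\<lambda>x. g x + h x) = l2_inner V f g + l2_inner V f h"
  unfolding l2_inner_def by (simp add: sum.distrib distrib_left)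

lemma l2_inner_diff_left: "l2_inner V (\<lambda>x. f x - g x) h = l2_inner V f h - l2_inner V g h"
  unfolding l2_inner_def by (simp add: sum_subtractf left_diff_distrib)

lemma l2_inner_self_nonneg: "0 \<le> l2_inner V f f"
  unfolding l2_inner_def by (rule sum_nonneg) simp

lemma sq_le_l2_inner_self: "finite V \<Longrightarrow> x \<in> V \<Longrightarrow> (f x)\<^sup>2 \<le> l2_inner V f f"
  unfolding l2_inner_def power2_eq_square by (rule member_le_sum) auto

lemma l2_inner_self_pos: "finite V \<Longrightarrow> x \<in> V \<Longrightarrow> f x \<noteq> 0 \<Longrightarrow> 0 < l2_inner V f f"
  using sq_le_l2_inner_self[of V x f] by (smt (verit) zero_less_power2)

lemma ex_nonzero_of_l2_inner_self:
  assumes "l2_inner V f f \<noteq> 0" shows "\<exists>x\<in>V. f x \<noteq> 0"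
proof (rule ccontr)
  assume "\<not> ?thesis"
  then have "l2_inner V f f = 0" unfolding l2_inner_def by (intro sum.neutral) simp
  with assms show False by simp
qed

lemma l2_inner_indicator: "finite V \<Longrightarrow> x \<in> V \<Longrightarrow> l2_inner V (indicator {x}) f = f x"
  unfolding l2_inner_def by (simp add: indicator_def if_distrib sum.delta cong: if_cong)

text \<open>Bessel's inequality for the orthonormal family \<open>v\<close>, applied to the vector
  \<open>h = \<Sum>\<mu>. v \<mu> x \<cdot> v \<mu>\<close>, whose value at \<open>x\<close> equals its squared norm.\<close>
lemma orthonormal_sum_sq_le_1:
  assumes V: "finite V" and M: "finite M" and x: "x \<in> V"
    and orth: "\<And>\<mu> \<nu>. \<mu> \<in> M \<Longrightarrow> \<nu> \<in> M \<Longrightarrow> l2_inner V (v \<mu>) (v \<nu>) = (if \<mu> = \<nu> then 1 else 0)"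
  shows "(\<Sum>\<mu>\<in>M. (v \<mu> x)\<^sup>2) \<le> 1"
proof -
  define s where "s = (\<Sum>\<mu>\<in>M. (v \<mu> x)\<^sup>2)"
  define h where "h y = (\<Sum>\<mu>\<in>M. v \<mu> x * v \<mu> y)" for y
  have h_v: "l2_inner V h (v \<nu>) = v \<nu> x" if "\<nu> \<in> M" for \<nu>
  proof -
    have "l2_inner V h (v \<nu>) = (\<Sum>y\<in>V. \<Sum>\<mu>\<in>M. v \<mu> x * (v \<mu> y * v \<nu> y))"
      unfolding l2_inner_def h_def by (simp add: sum_distrib_right mult.assoc)
    also have "\<dots> = (\<Sum>\<mu>\<in>M. v \<mu> x * l2_inner V (v \<mu>) (v \<nu>))"
      unfolding l2_inner_def by (subst sum.swap) (simp add: sum_distrib_left)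
    also have "\<dots> = (\<Sum>\<mu>\<in>M. if \<mu> = \<nu> then v \<mu> x else 0)"
      by (rule sum.cong) (simp_all add: orth that)
    also have "\<dots> = v \<nu> x" using M that by simp
    finally show ?thesis .
  qed
  have "l2_inner V h h = (\<Sum>y\<in>V. \<Sum>\<mu>\<in>M. v \<mu> x * (h y * v \<mu> y))"
    unfolding l2_inner_def h_def by (simp add: sum_distrib_left sum_distrib_right mult_ac)
  also have "\<dots> = (\<Sum>\<mu>\<in>M. v \<mu> x * l2_inner V h (v \<mu>))"
    unfolding l2_inner_def by (subst sum.swap) (simp add: sum_distrib_left)
  also have "\<dots> = s" unfolding s_def by (simp add: h_v power2_eq_square)
  finally have "s * s \<le> 1 * s"
    using sq_le_l2_inner_self[OF V x, of h] by (simp add: h_def s_def power2_eq_square)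
  moreover have "0 \<le> s" unfolding s_def by (simp add: sum_nonneg)
  ultimately show ?thesis
    unfolding s_def[symmetric] by (cases "s = 0") (simp_all add: mult_le_cancel_right_pos)
qed

lemma card_orthonormal_le:
  assumes V: "finite V" and M: "finite M"
    and orth: "\<And>\<mu> \<nu>. \<mu> \<in> M \<Longrightarrow> \<nu> \<in> M \<Longrightarrow> l2_inner V (v \<mu>) (v \<nu>) = (if \<mu> = \<nu> then 1 else 0)"
  shows "card M \<le> card V"
proof -
  have "real (card M) = (\<Sum>\<mu>\<in>M. \<Sum>x\<in>V. (v \<mu> x)\<^sup>2)"
    using orth by (simp add: l2_inner_def power2_eq_square)
  also have "\<dots> \<le> (\<Sum>x\<in>V. 1)"
    by (subst sum.swap) (intro sum_mono orthonormal_sum_sq_le_1[OF V M _ orth])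
  finally show ?thesis by simp
qed

section \<open>Weighted Laplacians\<close>

definition wlap :: "('a \<Rightarrow> real) \<Rightarrow> 'a set \<Rightarrow> ('a \<times> 'a) set \<Rightarrow> ('a \<Rightarrow> real) \<Rightarrow> 'a \<Rightarrow> real" where
  "wlap w V E f x = w x * f x - adj_op V E f x"

definition lap_form :: "('a \<Rightarrow> real) \<Rightarrow> 'a set \<Rightarrow> ('a \<times> 'a) set \<Rightarrow> ('a \<Rightarrow> real) \<Rightarrow> real" where
  "lap_form w V E f = l2_inner V f (wlap w V E f)"

lemma lap_A_eq_wlap: "lap_A k V E = wlap (\<lambda>_. real k) V E"
  by (intro ext) (simp add: lap_A_def wlap_def)

lemma lap_D_eq_wlap: "lap_D k V E = wlap (\<lambda>x. 2 * real k - real (gdeg E x)) V E"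
  by (intro ext) (simp add: lap_D_def wlap_def algebra_simps)

lemma lap_N_eq_wlap: "lap_N V E = wlap (\<lambda>x. real (gdeg E x)) V E"
  by (intro ext) (simp add: lap_N_def wlap_def)

lemma wlap_scale: "wlap w V E (\<lambda>y. a * f y) x = a * wlap w V E f x"
  by (simp add: wlap_def adj_op_def sum_distrib_left algebra_simps)

lemma wlap_add: "wlap w V E (\<lambda>y. f y + g y) x = wlap w V E f x + wlap w V E g x"
  by (simp add: wlap_def adj_op_def sum.distrib algebra_simps)

lemma lap_form_scale: "lap_form w V E (\<lambda>y. a * f y) = a\<^sup>2 * lap_form w V E f"
  unfolding lap_form_def wlap_scale l2_inner_scale_left l2_inner_scale_right
  by (simp add: power2_eq_square)

lemma continuous_lap_form: "continuous_on UNIV (lap_form w V E)"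
  unfolding lap_form_def l2_inner_def wlap_def adj_op_def
  by (intro continuous_on_sum continuous_on_mult continuous_on_diff continuous_on_const
      continuous_on_product_coordinates)

lemma lap_form_eigenvector:
  "\<forall>x\<in>V. wlap w V E f x = \<mu> * f x \<Longrightarrow> lap_form w V E f = \<mu> * l2_inner V f f"
  unfolding lap_form_def l2_inner_def by (simp add: sum_distrib_left mult_ac)

lemma eigenvalue_ge_of_form_ge:
  assumes V: "finite V" and eig: "is_eigenvalue V (wlap w V E) \<mu>"
    and form: "\<And>f. c * l2_inner V f f \<le> lap_form w V E f"
  shows "c \<le> \<mu>"
proof -
  obtain u x where x: "x \<in> V" "u x \<noteq> 0" and u: "\<forall>x\<in>V. wlap w V E u x = \<mu> * u x"
    using eig unfolding is_eigenvalue_def by blast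
  have "c * l2_inner V u u \<le> \<mu> * l2_inner V u u"
    using form[of u] lap_form_eigenvector[OF u] by simp
  then show ?thesis using l2_inner_self_pos[of V x u] V x by simp
qed

text \<open>\<open>E\<close> is a symmetric set of ordered pairs, so every edge is counted twice.\<close>
definition dirichlet_energy :: "('a \<times> 'a) set \<Rightarrow> ('a \<Rightarrow> real) \<Rightarrow> real" where
  "dirichlet_energy E f = (\<Sum>p\<in>E. (f (fst p) - f (snd p))\<^sup>2)"

lemma dirichlet_energy_nonneg: "0 \<le> dirichlet_energy E f"
  unfolding dirichlet_energy_def by (rule sum_nonneg) simp

lemma lap_form_cong: "(\<And>x. x \<in> V \<Longrightarrow> f x = f' x) \<Longrightarrow> lap_form w V E f = lap_form w V E f'"
  unfolding lap_form_def l2_inner_def wlap_def adj_op_def by (rule sum.cong) simp_all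

lemma linear_coeff_zero_of_quadratic_nonneg:
  fixes a b :: real
  assumes "\<And>t. 0 \<le> 2 * t * b + t\<^sup>2 * a"
  shows "b = 0"
proof (rule ccontr)
  assume "b \<noteq> 0"
  define D where "D = \<bar>a\<bar> + 1"
  have "0 < D" "a - 2 * D < 0" unfolding D_def by auto
  define t where "t = - b / D"
  have "2 * t * b + t\<^sup>2 * a = b\<^sup>2 * (a - 2 * D) / D\<^sup>2"
    unfolding t_def using \<open>0 < D\<close> by (simp add: field_simps power2_eq_square)
  also have "\<dots> < 0"
    using \<open>b \<noteq> 0\<close> \<open>0 < D\<close> \<open>a - 2 * D < 0\<close> by (intro divide_neg_pos mult_pos_neg) auto
  finally show False using assms[of t] by simp
qed

text \<open>Vectors of \<open>l\<^sup>2(V)\<close> are functions on the whole type; asking them to vanish off \<open>V\<close> makes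
  the sphere compact in the product topology.\<close>
lemma compact_unit_sphere_orthogonal:
  assumes V: "finite V"
  shows "compact {g. (\<forall>x. x \<notin> V \<longrightarrow> g x = 0) \<and> l2_inner V g g = 1 \<and> l2_inner V c g = 0}"
    (is "compact ?K")
proof -
  define B :: "('a \<Rightarrow> real) set" where "B = Pi UNIV (\<lambda>x. if x \<in> V then {-1..1} else {0})"
  have "compactin (product_topology (\<lambda>_. euclidean) UNIV)
      (PiE UNIV (\<lambda>x. if x \<in> V then {-1..1::real} else {0}))"
    by (subst compactin_PiE) (auto simp: compactin_euclidean_iff)
  then have "compact B"
    by (simp add: B_def euclidean_product_topology compactin_euclidean_iff PiE_UNIV_domain)
  have "?K \<subseteq> B"
  proof
    fix g assume g: "g \<in> ?K"
    have "\<bar>g x\<bar> \<le> 1" if "x \<in> V" for x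
      using sq_le_l2_inner_self[OF V that, of g] g by (simp add: abs_square_le_1)
    then show "g \<in> B" using g by (auto simp: B_def abs_le_iff)
  qed
  moreover have "closed ?K"
  proof -
    have "?K = (\<Inter>x\<in>-V. {g. g x = 0}) \<inter> {g. l2_inner V g g = 1} \<inter> {g. l2_inner V c g = 0}"
      by blast
    moreover have "closed {g::'a \<Rightarrow> real. g x = 0}" for x
      by (rule closed_Collect_eq) (simp_all add: continuous_on_product_coordinates)
    moreover have "closed {g. l2_inner V g g = 1}" "closed {g. l2_inner V c g = 0}"
      unfolding l2_inner_def
      by (intro closed_Collect_eq continuous_on_sum continuous_on_mult continuous_on_const
          continuous_on_product_coordinates)+
    ultimately show ?thesis by (simp only:) (intro closed_Int closed_INT ballI; assumption)
  qed
  ultimately show ?thesis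
    using compact_Int_closed[OF \<open>compact B\<close>, of ?K] by (simp add: Int_absorb1)
qed

lemma normalized_unit_vector:
  assumes "l2_inner V c f = 0" "0 < l2_inner V f f"
  defines "g \<equiv> \<lambda>x. if x \<in> V then f x / sqrt (l2_inner V f f) else 0"
  shows "g \<in> {g. (\<forall>x. x \<notin> V \<longrightarrow> g x = 0) \<and> l2_inner V g g = 1 \<and> l2_inner V c g = 0}"
    and "lap_form w V E g = lap_form w V E f / l2_inner V f f"
proof -
  let ?a = "1 / sqrt (l2_inner V f f)"
  have eq: "\<And>x. x \<in> V \<Longrightarrow> g x = ?a * f x" by (simp add: g_def)
  have "l2_inner V g g = l2_inner V (\<lambda>x. ?a * f x) (\<lambda>x. ?a * f x)"
    by (rule l2_inner_cong) (simp_all add: eq)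
  then have "l2_inner V g g = ?a\<^sup>2 * l2_inner V f f"
    by (simp only: l2_inner_scale_left l2_inner_scale_right power2_eq_square mult.assoc)
  moreover have "l2_inner V c g = l2_inner V c (\<lambda>x. ?a * f x)"
    by (rule l2_inner_cong) (simp_all add: eq)
  then have "l2_inner V c g = 0"
    using assms(1) by (simp only: l2_inner_scale_right mult_zero_right)
  ultimately show "g \<in> {g. (\<forall>x. x \<notin> V \<longrightarrow> g x = 0) \<and> l2_inner V g g = 1 \<and> l2_inner V c g = 0}"
    using assms(2) by (simp add: g_def power_divide)
  have "lap_form w V E g = lap_form w V E (\<lambda>x. ?a * f x)"
    by (rule lap_form_cong) (simp add: eq)
  then show "lap_form w V E g = lap_form w V E f / l2_inner V f f"
    using assms(2) by (simp only: lap_form_scale) (simp add: power_divide)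
qed

section \<open>Finite symmetric graphs\<close>

fun walk_edges :: "'a \<Rightarrow> 'a list \<Rightarrow> ('a \<times> 'a) set" where
  "walk_edges x [] = {}"
| "walk_edges x (y # ys) = insert (x, y) (walk_edges y ys)"

lemma finite_walk_edges: "finite (walk_edges x xs)"
  by (induction xs arbitrary: x) auto

lemma card_walk_edges_le: "card (walk_edges x xs) \<le> length xs"
  by (induction xs arbitrary: x) (simp_all add: card_insert_if finite_walk_edges le_SucI)

lemma walk_edges_subset:
  "rtrancl_path (\<lambda>a b. (a, b) \<in> E) x xs y \<Longrightarrow> walk_edges x xs \<subseteq> E"
  by (induction rule: rtrancl_path.induct) auto

lemma walk_vertices_subset:
  "rtrancl_path (\<lambda>a b. (a, b) \<in> E) x xs y \<Longrightarrow> E \<subseteq> V \<times> V \<Longrightarrow> set xs \<subseteq> V"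
  by (induction rule: rtrancl_path.induct) auto

lemma abs_diff_le_walk_sum:
  fixes f :: "'a \<Rightarrow> real"
  assumes "rtrancl_path (\<lambda>a b. (a, b) \<in> E) x xs y" "distinct (x # xs)"
  shows "\<bar>f x - f y\<bar> \<le> (\<Sum>p\<in>walk_edges x xs. \<bar>f (fst p) - f (snd p)\<bar>)"
  using assms
proof (induction rule: rtrancl_path.induct)
  case (step x y ys z)
  have "(x, y) \<notin> walk_edges y ys"
  proof
    assume "(x, y) \<in> walk_edges y ys"
    moreover have "fst ` walk_edges y ys \<subseteq> insert y (set ys)"
      by (induction ys arbitrary: y) auto
    ultimately show False using step.prems by force
  qed
  then show ?case
    using step.IH step.prems by (simp add: finite_walk_edges)
qed simp

locale finite_graph =
  fixes V :: "'a set" and E :: "('a \<times> 'a) set"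
  assumes finite_V: "finite V" and E_sub: "E \<subseteq> V \<times> V" and sym_E: "sym E"
begin

lemma finite_E: "finite E"
  using finite_subset[OF E_sub] finite_V by blast

lemma sum_edges_swap: "(\<Sum>p\<in>E. h (fst p) (snd p)) = (\<Sum>p\<in>E. h (snd p) (fst p))"
  by (rule sum.reindex_bij_witness[of _ prod.swap prod.swap]) (use sym_E in \<open>auto elim: symE\<close>)

lemma l2_inner_adj_op: "l2_inner V g (adj_op V E f) = (\<Sum>p\<in>E. g (fst p) * f (snd p))"
proof -
  have E: "E = Sigma V (\<lambda>x. {y\<in>V. (x, y) \<in> E})" using E_sub by auto
  have "l2_inner V g (adj_op V E f) = (\<Sum>x\<in>V. \<Sum>y\<in>{y\<in>V. (x, y) \<in> E}. g x * f y)"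
    by (simp add: l2_inner_def adj_op_def sum_distrib_left)
  also have "\<dots> = (\<Sum>p\<in>Sigma V (\<lambda>x. {y\<in>V. (x, y) \<in> E}). g (fst p) * f (snd p))"
    by (subst sum.Sigma) (use finite_V in \<open>auto simp: case_prod_beta\<close>)
  finally show ?thesis using E by simp
qed

lemma wlap_self_adjoint: "l2_inner V g (wlap w V E f) = l2_inner V f (wlap w V E g)"
proof -
  have "l2_inner V g (adj_op V E f) = l2_inner V f (adj_op V E g)"
    unfolding l2_inner_adj_op by (subst sum_edges_swap) (simp add: mult.commute)
  then show ?thesis
    by (simp add: l2_inner_def wlap_def sum_subtractf algebra_simps)
qed

lemma eigenvectors_orthogonal:
  assumes f: "\<forall>x\<in>V. wlap w V E f x = \<mu> * f x" and g: "\<forall>x\<in>V. wlap w V E g x = \<nu> * g x"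
    and "\<mu> \<noteq> \<nu>"
  shows "l2_inner V f g = 0"
proof -
  have "\<mu> * l2_inner V f g = l2_inner V g (wlap w V E f)"
    using f by (simp add: l2_inner_def sum_distrib_left mult_ac)
  also have "\<dots> = l2_inner V f (wlap w V E g)" by (rule wlap_self_adjoint)
  also have "\<dots> = \<nu> * l2_inner V f g"
    using g by (simp add: l2_inner_def sum_distrib_left mult_ac)
  finally show ?thesis using \<open>\<mu> \<noteq> \<nu>\<close> by simp
qed

text \<open>Normalised eigenvectors for distinct eigenvalues form an orthonormal family, so there are at
  most \<open>card V\<close> eigenvalues.\<close>
lemma finite_eigenvalues: "finite {\<mu>. is_eigenvalue V (wlap w V E) \<mu>}"
proof (rule ccontr)
  assume "infinite {\<mu>. is_eigenvalue V (wlap w V E) \<mu>}"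
  then obtain M where M: "M \<subseteq> {\<mu>. is_eigenvalue V (wlap w V E) \<mu>}" "finite M"
    "card M = Suc (card V)"
    using infinite_arbitrarily_large by blast
  have "\<forall>\<mu>\<in>M. \<exists>u. (\<exists>x\<in>V. u x \<noteq> 0) \<and> (\<forall>x\<in>V. wlap w V E u x = \<mu> * u x)"
    using M(1) unfolding is_eigenvalue_def by blast
  then obtain u where u: "\<And>\<mu>. \<mu> \<in> M \<Longrightarrow> (\<exists>x\<in>V. u \<mu> x \<noteq> 0) \<and> (\<forall>x\<in>V. wlap w V E (u \<mu>) x = \<mu> * u \<mu> x)"
    by (metis bchoice)
  define v where "v \<mu> = (\<lambda>y. u \<mu> y / sqrt (l2_inner V (u \<mu>) (u \<mu>)))" for \<mu>
  have pos: "0 < l2_inner V (u \<mu>) (u \<mu>)" if "\<mu> \<in> M" for \<mu>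
    using u[OF that] l2_inner_self_pos[OF finite_V] by blast
  have "l2_inner V (v \<mu>) (v \<nu>) = (if \<mu> = \<nu> then 1 else 0)" if "\<mu> \<in> M" "\<nu> \<in> M" for \<mu> \<nu>
  proof (cases "\<mu> = \<nu>")
    case True
    have "l2_inner V (v \<mu>) (v \<mu>) = l2_inner V (u \<mu>) (u \<mu>) / (sqrt (l2_inner V (u \<mu>) (u \<mu>)))\<^sup>2"
      unfolding v_def l2_inner_def by (simp add: power2_eq_square sum_divide_distrib)
    then show ?thesis using pos[OF that(1)] True by simp
  next
    case False
    have "l2_inner V (u \<mu>) (u \<nu>) = 0"
      using eigenvectors_orthogonal u that False by blast
    then show ?thesis using False
      by (simp add: v_def l2_inner_def sum_divide_distrib[symmetric])
  qed
  then have "card M \<le> card V" by (rule card_orthonormal_le[OF finite_V M(2)])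
  then show False using M(3) by simp
qed

lemma gdeg_eq_card: "gdeg E x = card {y\<in>V. (x, y) \<in> E}"
  unfolding gdeg_def using E_sub by (metis (no_types, lifting) Collect_cong SigmaD2 subsetD)

lemma adj_op_const_one: "adj_op V E (\<lambda>_. 1) x = real (gdeg E x)"
  unfolding adj_op_def by (simp add: gdeg_eq_card)

lemma lap_N_const_one: "wlap (\<lambda>x. real (gdeg E x)) V E (\<lambda>_. 1) x = 0"
  unfolding wlap_def by (simp add: adj_op_const_one)

lemma lap_form_eq_energy:
  "lap_form w V E f = (\<Sum>x\<in>V. (w x - real (gdeg E x)) * (f x)\<^sup>2) + dirichlet_energy E f / 2"
proof -
  have deg: "(\<Sum>p\<in>E. (f (fst p))\<^sup>2) = (\<Sum>x\<in>V. real (gdeg E x) * (f x)\<^sup>2)"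
    using l2_inner_adj_op[of "\<lambda>x. (f x)\<^sup>2" "\<lambda>_. 1"]
    by (simp add: l2_inner_def adj_op_const_one mult.commute)
  have "dirichlet_energy E f
      = (\<Sum>p\<in>E. (f (fst p))\<^sup>2) + (\<Sum>p\<in>E. (f (snd p))\<^sup>2) - 2 * (\<Sum>p\<in>E. f (fst p) * f (snd p))"
    unfolding dirichlet_energy_def
    by (simp add: power2_diff sum.distrib sum_subtractf sum_distrib_left mult.assoc)
  also have "(\<Sum>p\<in>E. (f (snd p))\<^sup>2) = (\<Sum>p\<in>E. (f (fst p))\<^sup>2)"
    by (rule sum_edges_swap)
  finally have "dirichlet_energy E f / 2
      = (\<Sum>x\<in>V. real (gdeg E x) * (f x)\<^sup>2) - l2_inner V f (adj_op V E f)"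
    by (simp add: deg l2_inner_adj_op)
  then show ?thesis
    by (simp add: lap_form_def l2_inner_def wlap_def algebra_simps sum_subtractf power2_eq_square)
qed

lemma lap_form_add_scaled:
  "lap_form w V E (\<lambda>x. g x + t * h x)
    = lap_form w V E g + 2 * t * l2_inner V h (wlap w V E g) + t\<^sup>2 * lap_form w V E h"
proof -
  have "lap_form w V E (\<lambda>x. g x + t * h x)
      = lap_form w V E g + t * l2_inner V g (wlap w V E h) + t * l2_inner V h (wlap w V E g)
        + t\<^sup>2 * lap_form w V E h"
    unfolding lap_form_def wlap_add wlap_scale l2_inner_def
    by (simp add: sum.distrib sum_distrib_left algebra_simps power2_eq_square)
  then show ?thesis using wlap_self_adjoint[of g w h] by simp
qed

text \<open>The minimum exists because the unit sphere of the orthogonal complement of \<open>c\<close> is compact.\<close>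
lemma exists_lap_form_minimizer:
  assumes f0: "l2_inner V c f0 = 0" "x0 \<in> V" "f0 x0 \<noteq> 0"
  obtains g where "l2_inner V g g = 1" "l2_inner V c g = 0"
    "\<And>f. l2_inner V c f = 0 \<Longrightarrow> lap_form w V E g * l2_inner V f f \<le> lap_form w V E f"
proof -
  define K where "K = {g. (\<forall>x. x \<notin> V \<longrightarrow> g x = 0) \<and> l2_inner V g g = 1 \<and> l2_inner V c g = 0}"
  note normalized = normalized_unit_vector[of V c, folded K_def]
  have "K \<noteq> {}" using normalized(1)[OF f0(1) l2_inner_self_pos[of V x0 f0]] finite_V f0 by blast
  from continuous_attains_inf[OF compact_unit_sphere_orthogonal[OF finite_V, of c, folded K_def]
      this continuous_on_subset[OF continuous_lap_form subset_UNIV]]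
  obtain g where g: "g \<in> K" and min: "\<And>h. h \<in> K \<Longrightarrow> lap_form w V E g \<le> lap_form w V E h"
    by blast
  show ?thesis
  proof (rule that)
    show "l2_inner V g g = 1" "l2_inner V c g = 0" using g by (auto simp: K_def)
    fix f assume f: "l2_inner V c f = 0"
    show "lap_form w V E g * l2_inner V f f \<le> lap_form w V E f"
    proof (cases "l2_inner V f f = 0")
      case True
      have "lap_form w V E f = lap_form w V E (\<lambda>_. 0)"
        using l2_inner_self_pos[of V _ f] finite_V True by (intro lap_form_cong) fastforce
      then show ?thesis using True by (simp add: lap_form_def l2_inner_def)
    next
      case False
      then have pos: "0 < l2_inner V f f" using l2_inner_self_nonneg[of V f] by simp
      have "lap_form w V E g \<le> lap_form w V E f / l2_inner V f f"
        using min[OF normalized(1)[OF f pos]] normalized(2)[OF f pos] by simp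
      then show ?thesis using pos by (simp add: field_simps)
    qed
  qed
qed

text \<open>First variation of the Rayleigh quotient at its minimiser \<open>g\<close>, in a direction \<open>h \<perp> c\<close>.\<close>
lemma lap_form_stationary:
  assumes min: "\<And>f. l2_inner V c f = 0 \<Longrightarrow> lam * l2_inner V f f \<le> lap_form w V E f"
    and g: "l2_inner V c g = 0" "lap_form w V E g = lam * l2_inner V g g"
    and h: "l2_inner V c h = 0"
  shows "l2_inner V h (wlap w V E g) = lam * l2_inner V g h"
proof -
  have "0 \<le> 2 * t * (l2_inner V h (wlap w V E g) - lam * l2_inner V g h)
           + t\<^sup>2 * (lap_form w V E h - lam * l2_inner V h h)" for t
  proof -
    let ?f = "\<lambda>x. g x + t * h x"
    have "l2_inner V c ?f = 0"
      using g(1) h by (simp add: l2_inner_add_right l2_inner_scale_right)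
    moreover have "l2_inner V ?f ?f = l2_inner V g g + 2 * t * l2_inner V g h + t\<^sup>2 * l2_inner V h h"
      unfolding l2_inner_def
      by (simp add: sum.distrib sum_distrib_left algebra_simps power2_eq_square)
    ultimately show ?thesis
      using min[of ?f] g(2) unfolding lap_form_add_scaled by (simp add: algebra_simps)
  qed
  then show ?thesis using linear_coeff_zero_of_quadratic_nonneg by force
qed

lemma exists_least_eigenvalue:
  assumes "V \<noteq> {}"
  obtains lam where "is_eigenvalue V (wlap w V E) lam"
    "\<And>f. lam * l2_inner V f f \<le> lap_form w V E f"
proof -
  obtain x0 where x0: "x0 \<in> V" using assms by blast
  have zero: "l2_inner V (\<lambda>_. 0) f = 0" for f by (simp add: l2_inner_def)
  obtain g where g: "l2_inner V g g = 1" "l2_inner V (\<lambda>_. 0) g = 0"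
    and min: "\<And>f. l2_inner V (\<lambda>_. 0) f = 0 \<Longrightarrow> lap_form w V E g * l2_inner V f f \<le> lap_form w V E f"
    by (rule exists_lap_form_minimizer[OF zero x0, of "indicator {x0}"]) (use x0 in auto)
  let ?lam = "lap_form w V E g"
  have "wlap w V E g x = ?lam * g x" if x: "x \<in> V" for x
  proof -
    have "l2_inner V (indicator {x}) (wlap w V E g) = ?lam * l2_inner V g (indicator {x})"
      by (rule lap_form_stationary[OF min zero]) (simp_all add: g(1) zero)
    then show ?thesis using finite_V x by (simp add: l2_inner_indicator l2_inner_commute[of V g])
  qed
  moreover have "\<exists>x\<in>V. g x \<noteq> 0" by (rule ex_nonzero_of_l2_inner_self) (simp add: g(1))
  ultimately have "is_eigenvalue V (wlap w V E) ?lam" unfolding is_eigenvalue_def by blast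
  then show ?thesis using that min zero by blast
qed

text \<open>The constrained minimiser satisfies the eigenvalue equation up to a constant \<open>r\<close>,
  which vanishes because \<open>\<langle>1, L g\<rangle> = \<langle>g, L 1\<rangle> = 0\<close>.\<close>
lemma exists_least_eigenvalue_orth_const:
  assumes const: "\<forall>x\<in>V. wlap w V E (\<lambda>_. 1) x = 0"
    and x01: "x0 \<in> V" "x1 \<in> V" "x0 \<noteq> x1"
  obtains lam g where "\<exists>x\<in>V. g x \<noteq> 0" "\<forall>x\<in>V. wlap w V E g x = lam * g x"
    "l2_inner V (\<lambda>_. 1) g = 0"
    "\<And>f. l2_inner V (\<lambda>_. 1) f = 0 \<Longrightarrow> lam * l2_inner V f f \<le> lap_form w V E f"
proof -
  let ?one = "\<lambda>_. 1 :: real"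
  define d :: "'a \<Rightarrow> 'a \<Rightarrow> real" where "d x y = indicator {x} y - indicator {x0} y" for x y
  have d_orth: "l2_inner V ?one (d x) = 0" if "x \<in> V" for x
    unfolding l2_inner_commute[of V ?one] d_def l2_inner_diff_left
    using that x01 finite_V by (simp add: l2_inner_indicator)
  obtain g where g: "l2_inner V g g = 1" "l2_inner V ?one g = 0"
    and min: "\<And>f. l2_inner V ?one f = 0 \<Longrightarrow> lap_form w V E g * l2_inner V f f \<le> lap_form w V E f"
    by (rule exists_lap_form_minimizer[OF d_orth[OF x01(2)] x01(2)]) (use x01 in \<open>auto simp: d_def\<close>)
  let ?lam = "lap_form w V E g"
  define r where "r x = wlap w V E g x - ?lam * g x" for x
  have r_const: "r x = r x0" if x: "x \<in> V" for x
  proof -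
    have "l2_inner V (d x) (wlap w V E g) = ?lam * l2_inner V g (d x)"
      using lap_form_stationary[OF min g(2) _ d_orth[OF x]] g(1) by simp
    then show ?thesis using finite_V x x01 unfolding d_def
      by (simp add: r_def l2_inner_diff_left l2_inner_indicator l2_inner_commute[of V g]
          algebra_simps)
  qed
  have "(\<Sum>x\<in>V. r x) = l2_inner V ?one (wlap w V E g) - ?lam * l2_inner V ?one g"
    by (simp add: r_def l2_inner_def sum_subtractf sum_distrib_left)
  also have "l2_inner V ?one (wlap w V E g) = l2_inner V g (wlap w V E ?one)"
    by (rule wlap_self_adjoint)
  also have "\<dots> = 0" using const by (simp add: l2_inner_def)
  finally have "real (card V) * r x0 = 0" using r_const g(2) by simp
  then have "r x0 = 0" using x01 finite_V by (auto simp: card_gt_0_iff)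
  then have "\<forall>x\<in>V. wlap w V E g x = ?lam * g x" using r_const by (simp add: r_def)
  moreover have "\<exists>x\<in>V. g x \<noteq> 0" by (rule ex_nonzero_of_l2_inner_self) (simp add: g(1))
  ultimately show ?thesis using that g(2) min by blast
qed

lemma lowest_nz_eig_le:
  "is_eigenvalue V (wlap w V E) \<mu> \<Longrightarrow> \<mu> \<noteq> 0 \<Longrightarrow> lowest_nz_eig V (wlap w V E) \<le> \<mu>"
  unfolding lowest_nz_eig_def
  by (rule Min_le) (auto intro: finite_subset[OF _ finite_eigenvalues])

lemma lowest_nz_eig_ge:
  assumes "\<exists>\<mu>. is_eigenvalue V (wlap w V E) \<mu> \<and> \<mu> \<noteq> 0"
    and "\<And>\<mu>. is_eigenvalue V (wlap w V E) \<mu> \<Longrightarrow> \<mu> \<noteq> 0 \<Longrightarrow> c \<le> \<mu>"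
  shows "c \<le> lowest_nz_eig V (wlap w V E)"
  unfolding lowest_nz_eig_def using assms
  by (subst Min_ge_iff) (auto intro: finite_subset[OF _ finite_eigenvalues])

lemma lowest_nz_eig_coercive:
  assumes "V \<noteq> {}" "0 < c" and coercive: "\<And>f. c * l2_inner V f f \<le> lap_form w V E f"
  shows "c \<le> lowest_nz_eig V (wlap w V E)"
    and "lowest_nz_eig V (wlap w V E) * l2_inner V f f \<le> lap_form w V E f"
proof -
  obtain lam where lam: "is_eigenvalue V (wlap w V E) lam"
    "\<And>f. lam * l2_inner V f f \<le> lap_form w V E f"
    using exists_least_eigenvalue[OF assms(1), where w = w] by metis
  have "c \<le> lam" by (rule eigenvalue_ge_of_form_ge[OF finite_V lam(1) coercive])
  then have "lowest_nz_eig V (wlap w V E) \<le> lam"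
    using lowest_nz_eig_le[OF lam(1)] \<open>0 < c\<close> by simp
  then have "lowest_nz_eig V (wlap w V E) * l2_inner V f f \<le> lam * l2_inner V f f"
    by (rule mult_right_mono[OF _ l2_inner_self_nonneg])
  also have "\<dots> \<le> lap_form w V E f" by (rule lam(2))
  finally show "lowest_nz_eig V (wlap w V E) * l2_inner V f f \<le> lap_form w V E f" .
  have ge: "c \<le> \<mu>" if "is_eigenvalue V (wlap w V E) \<mu>" for \<mu>
    by (rule eigenvalue_ge_of_form_ge[OF finite_V that coercive])
  have "lam \<noteq> 0" using \<open>c \<le> lam\<close> \<open>0 < c\<close> by simp
  then show "c \<le> lowest_nz_eig V (wlap w V E)"
    by (intro lowest_nz_eig_ge) (use lam(1) ge in blast)+
qed

lemma lowest_nz_eig_le_rayleigh_orth_const: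
  assumes const: "\<forall>x\<in>V. wlap w V E (\<lambda>_. 1) x = 0"
    and x01: "x0 \<in> V" "x1 \<in> V" "x0 \<noteq> x1" and "0 < c"
    and coercive: "\<And>f. l2_inner V (\<lambda>_. 1) f = 0 \<Longrightarrow> c * l2_inner V f f \<le> lap_form w V E f"
    and f: "l2_inner V (\<lambda>_. 1) f = 0"
  shows "lowest_nz_eig V (wlap w V E) * l2_inner V f f \<le> lap_form w V E f"
proof -
  obtain g lam where g: "\<exists>x\<in>V. g x \<noteq> 0" "\<forall>x\<in>V. wlap w V E g x = lam * g x"
      "l2_inner V (\<lambda>_. 1) g = 0"
    and min: "\<And>f. l2_inner V (\<lambda>_. 1) f = 0 \<Longrightarrow> lam * l2_inner V f f \<le> lap_form w V E f"
    using exists_least_eigenvalue_orth_const[OF const x01] by metis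
  have eig: "is_eigenvalue V (wlap w V E) lam" unfolding is_eigenvalue_def using g(1,2) by blast
  have "c * l2_inner V g g \<le> lam * l2_inner V g g"
    using coercive[OF g(3)] lap_form_eigenvector[OF g(2)] by simp
  moreover obtain x where "x \<in> V" "g x \<noteq> 0" using g(1) by blast
  ultimately have "c \<le> lam" using l2_inner_self_pos[of V x g] finite_V by simp
  then have "lowest_nz_eig V (wlap w V E) \<le> lam"
    using lowest_nz_eig_le[OF eig] \<open>0 < c\<close> by simp
  then have "lowest_nz_eig V (wlap w V E) * l2_inner V f f \<le> lam * l2_inner V f f"
    by (rule mult_right_mono[OF _ l2_inner_self_nonneg])
  also have "\<dots> \<le> lap_form w V E f" by (rule min[OF f])
  finally show ?thesis .
qed

text \<open>Join \<open>x\<close> to \<open>y\<close> by a simple walk, of fewer than \<open>card V\<close> edges, and apply Cauchy--Schwarz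
  along it.\<close>
lemma sq_diff_le_card_mul_energy:
  assumes conn: "graph_connected V E" and x: "x \<in> V" and y: "y \<in> V"
  shows "(f x - f y)\<^sup>2 \<le> real (card V) * dirichlet_energy E f"
proof -
  have "(\<lambda>a b. (a, b) \<in> E)\<^sup>*\<^sup>* x y"
    using conn x y unfolding graph_connected_def by (simp add: rtranclp_rtrancl_eq)
  then obtain xs0 where "rtrancl_path (\<lambda>a b. (a, b) \<in> E) x xs0 y"
    by (auto simp: rtranclp_eq_rtrancl_path)
  then obtain xs where p: "rtrancl_path (\<lambda>a b. (a, b) \<in> E) x xs y" and d: "distinct (x # xs)"
    using rtrancl_path_distinct by metis
  let ?P = "walk_edges x xs"
  have "set (x # xs) \<subseteq> V" using walk_vertices_subset[OF p E_sub] x by simp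
  then have "length (x # xs) \<le> card V"
    using card_mono[OF finite_V] distinct_card[OF d] by metis
  then have card_P: "real (card ?P) \<le> real (card V)"
    using card_walk_edges_le[of x xs] by simp
  have "(f x - f y)\<^sup>2 = \<bar>f x - f y\<bar>\<^sup>2" by simp
  also have "\<dots> \<le> (\<Sum>p\<in>?P. \<bar>f (fst p) - f (snd p)\<bar>)\<^sup>2"
    by (rule power_mono[OF abs_diff_le_walk_sum[OF p d] abs_ge_zero])
  also have "\<dots> = (\<Sum>p\<in>?P. \<bar>f (fst p) - f (snd p)\<bar> * 1)\<^sup>2" by simp
  also have "\<dots> \<le> (\<Sum>p\<in>?P. (f (fst p) - f (snd p))\<^sup>2) * real (card ?P)"
    using Cauchy_Schwarz_ineq_sum[of "\<lambda>p. \<bar>f (fst p) - f (snd p)\<bar>" "\<lambda>_. 1" ?P] by simp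
  also have "\<dots> \<le> dirichlet_energy E f * real (card V)"
    unfolding dirichlet_energy_def
    by (intro mult_mono sum_mono2 finite_E walk_edges_subset[OF p] card_P sum_nonneg) auto
  finally show ?thesis by (simp add: mult.commute)
qed

text \<open>For \<open>\<Sum>f = 0\<close> one has \<open>\<Sum>\<^sub>x\<^sub>,\<^sub>y (f x - f y)\<^sup>2 = 2 |V| \<parallel>f\<parallel>\<^sup>2\<close>.\<close>
lemma poincare_inequality:
  assumes conn: "graph_connected V E" and f: "l2_inner V (\<lambda>_. 1) f = 0"
  shows "l2_inner V f f \<le> (real (card V))\<^sup>2 * (dirichlet_energy E f / 2)"
proof -
  let ?n = "real (card V)"
  have sum_f: "(\<Sum>x\<in>V. f x) = 0" using f by (simp add: l2_inner_def)
  have "(\<Sum>x\<in>V. \<Sum>y\<in>V. (f x - f y)\<^sup>2)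
      = (\<Sum>x\<in>V. \<Sum>y\<in>V. (f x)\<^sup>2 + (f y)\<^sup>2 - 2 * f x * f y)"
    by (simp add: power2_diff)
  also have "\<dots> = (\<Sum>x\<in>V. ?n * (f x)\<^sup>2 + (\<Sum>y\<in>V. (f y)\<^sup>2) - 2 * f x * (\<Sum>y\<in>V. f y))"
    by (simp add: sum.distrib sum_subtractf sum_distrib_left mult.assoc)
  also have "\<dots> = 2 * ?n * l2_inner V f f"
    using sum_f by (simp add: sum.distrib sum_subtractf sum_distrib_left[symmetric] l2_inner_def
        power2_eq_square)
  finally have eq: "(\<Sum>x\<in>V. \<Sum>y\<in>V. (f x - f y)\<^sup>2) = 2 * ?n * l2_inner V f f" .
  moreover have "(\<Sum>x\<in>V. \<Sum>y\<in>V. (f x - f y)\<^sup>2) \<le> (\<Sum>x\<in>V. \<Sum>y\<in>V. ?n * dirichlet_energy E f)"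
    by (intro sum_mono sq_diff_le_card_mul_energy[OF conn])
  ultimately have "2 * ?n * l2_inner V f f \<le> (\<Sum>x\<in>V. \<Sum>y\<in>V. ?n * dirichlet_energy E f)"
    by simp
  then have "?n * (2 * l2_inner V f f) \<le> ?n * (?n\<^sup>2 * dirichlet_energy E f)"
    by (simp add: power2_eq_square algebra_simps)
  moreover have "V \<noteq> {}" using conn by (simp add: graph_connected_def)
  ultimately show ?thesis using finite_V by (simp add: card_gt_0_iff)
qed

lemma eigenvector_orth_const:
  assumes const: "\<forall>x\<in>V. wlap w V E (\<lambda>_. 1) x = 0"
    and u: "\<forall>x\<in>V. wlap w V E u x = \<mu> * u x" and "\<mu> \<noteq> 0"
  shows "l2_inner V (\<lambda>_. 1) u = 0"
proof -
  have "\<mu> * l2_inner V (\<lambda>_. 1) u = l2_inner V (\<lambda>_. 1) (wlap w V E u)"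
    using u by (simp add: l2_inner_def sum_distrib_left)
  also have "\<dots> = l2_inner V u (wlap w V E (\<lambda>_. 1))" by (rule wlap_self_adjoint)
  also have "\<dots> = 0" using const by (simp add: l2_inner_def)
  finally show ?thesis using \<open>\<mu> \<noteq> 0\<close> by simp
qed

lemma lap_N_form_eq: "lap_form (\<lambda>x. real (gdeg E x)) V E f = dirichlet_energy E f / 2"
  by (simp add: lap_form_eq_energy)

lemma lap_N_eigenvalue_ge:
  assumes conn: "graph_connected V E"
    and eig: "is_eigenvalue V (wlap (\<lambda>x. real (gdeg E x)) V E) \<mu>" and "\<mu> \<noteq> 0"
  shows "1 / (real (card V))\<^sup>2 \<le> \<mu>"
proof -
  obtain u x where x: "x \<in> V" "u x \<noteq> 0"
    and u: "\<forall>x\<in>V. wlap (\<lambda>x. real (gdeg E x)) V E u x = \<mu> * u x"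
    using eig unfolding is_eigenvalue_def by blast
  have "l2_inner V u u \<le> (real (card V))\<^sup>2 * (\<mu> * l2_inner V u u)"
    using poincare_inequality[OF conn eigenvector_orth_const[OF _ u \<open>\<mu> \<noteq> 0\<close>]]
      lap_form_eigenvector[OF u] by (simp add: lap_N_form_eq lap_N_const_one mult_ac)
  then have "1 * l2_inner V u u \<le> ((real (card V))\<^sup>2 * \<mu>) * l2_inner V u u"
    by (simp add: algebra_simps)
  then have "1 \<le> (real (card V))\<^sup>2 * \<mu>"
    using l2_inner_self_pos[of V x u] finite_V x by (simp add: mult_le_cancel_right)
  moreover have "0 < card V" using x finite_V by (auto simp: card_gt_0_iff)
  ultimately show ?thesis by (simp add: field_simps)
qed

end

section \<open>Cayley graphs\<close>

locale cayley_graph = group G for G (structure) +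
  fixes S
  assumes S_sub: "S \<subseteq> carrier G" and finite_S: "finite S" and S_inv: "\<And>s. s \<in> S \<Longrightarrow> inv s \<in> S"
begin

lemma word_prod_Nil [simp]: "word_prod G [] = \<one>"
  by (simp add: word_prod_def)

lemma word_prod_Cons [simp]: "word_prod G (s # ws) = s \<otimes> word_prod G ws"
  by (simp add: word_prod_def)

lemma word_prod_closed: "set ws \<subseteq> S \<Longrightarrow> word_prod G ws \<in> carrier G"
  by (induction ws) (use S_sub in auto)

lemma word_prod_append:
  "set ws \<subseteq> S \<Longrightarrow> set vs \<subseteq> S \<Longrightarrow> word_prod G (ws @ vs) = word_prod G ws \<otimes> word_prod G vs"
  by (induction ws) (use S_sub in \<open>auto simp: m_assoc word_prod_closed\<close>)

lemma word_prod_snoc: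
  "set ws \<subseteq> S \<Longrightarrow> s \<in> S \<Longrightarrow> word_prod G (ws @ [s]) = word_prod G ws \<otimes> s"
  using word_prod_append[of ws "[s]"] S_sub by auto

lemma finite_cay_ball: "finite (cay_ball G S n)"
proof -
  have "cay_ball G S n = word_prod G ` {ws. set ws \<subseteq> S \<and> length ws \<le> n}"
    unfolding cay_ball_def by blast
  then show ?thesis using finite_lists_length_le[OF finite_S] by simp
qed

lemma cay_ball_carrier: "cay_ball G S n \<subseteq> carrier G"
  unfolding cay_ball_def using word_prod_closed by blast

lemma one_in_cay_ball: "\<one> \<in> cay_ball G S n"
  unfolding cay_ball_def by (rule CollectI, rule exI[of _ "[]"]) simp

lemma cay_ball_mono: "n \<le> m \<Longrightarrow> cay_ball G S n \<subseteq> cay_ball G S m"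
  unfolding cay_ball_def by force

lemma mult_in_cay_ball:
  assumes "x \<in> cay_ball G S n" "y \<in> cay_ball G S m"
  shows "x \<otimes> y \<in> cay_ball G S (n + m)"
proof -
  obtain ws where ws: "x = word_prod G ws" "set ws \<subseteq> S" "length ws \<le> n"
    using assms(1) unfolding cay_ball_def by blast
  obtain vs where vs: "y = word_prod G vs" "set vs \<subseteq> S" "length vs \<le> m"
    using assms(2) unfolding cay_ball_def by blast
  have "x \<otimes> y = word_prod G (ws @ vs)" using ws vs by (simp add: word_prod_append)
  moreover have "set (ws @ vs) \<subseteq> S" "length (ws @ vs) \<le> n + m" using ws vs by auto
  ultimately show ?thesis unfolding cay_ball_def by blast
qed

lemma gen_in_cay_ball: "s \<in> S \<Longrightarrow> s \<in> cay_ball G S 1"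
  unfolding cay_ball_def by (rule CollectI, rule exI[of _ "[s]"]) (use S_sub in auto)

lemma mult_gen_in_cay_ball: "x \<in> cay_ball G S n \<Longrightarrow> s \<in> S \<Longrightarrow> x \<otimes> s \<in> cay_ball G S (Suc n)"
  using mult_in_cay_ball[OF _ gen_in_cay_ball] by simp

lemma ball_vol_pos: "0 < ball_vol G S n"
  unfolding ball_vol_def using one_in_cay_ball finite_cay_ball by (auto simp: card_gt_0_iff)

lemma ball_vol_0: "ball_vol G S 0 = 1"
proof -
  have "cay_ball G S 0 = {\<one>}" unfolding cay_ball_def by auto
  then show ?thesis by (simp add: ball_vol_def)
qed

lemma generate_in_cay_ball: "x \<in> generate G S \<Longrightarrow> \<exists>n. x \<in> cay_ball G S n"
proof (induction rule: generate.induct)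
  case one
  then show ?case using one_in_cay_ball by blast
next
  case (incl s)
  then show ?case using gen_in_cay_ball by blast
next
  case (inv s)
  then show ?case using gen_in_cay_ball S_inv by blast
next
  case (eng x y)
  then show ?case using mult_in_cay_ball by blast
qed

text \<open>Telescoping along the word and Cauchy--Schwarz.\<close>
lemma sq_diff_word_le:
  fixes F :: "'a \<Rightarrow> real"
  assumes ws: "set ws \<subseteq> S" and x: "x \<in> carrier G"
  shows "(F x - F (x \<otimes> word_prod G ws))\<^sup>2 \<le> real (length ws) *
    (\<Sum>i<length ws. (F (x \<otimes> word_prod G (take i ws)) - F (x \<otimes> word_prod G (take i ws) \<otimes> ws ! i))\<^sup>2)"
proof -
  let ?L = "length ws"
  define a where "a i = F (x \<otimes> word_prod G (take i ws))" for i
  have a_Suc: "a (Suc i) = F (x \<otimes> word_prod G (take i ws) \<otimes> ws ! i)" if "i < ?L" for i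
  proof -
    have "set (take i ws) \<subseteq> S" using ws by (meson order_trans set_take_subset)
    moreover have "ws ! i \<in> S" using ws that by (meson nth_mem subsetD)
    ultimately show ?thesis
      using that x S_sub by (auto simp: a_def take_Suc_conv_app_nth word_prod_snoc m_assoc
          word_prod_closed)
  qed
  have "F x - F (x \<otimes> word_prod G ws) = (\<Sum>i<?L. (a i - a (Suc i)) * 1)"
    using sum_lessThan_telescope'[of a ?L] x by (simp add: a_def)
  then have "(F x - F (x \<otimes> word_prod G ws))\<^sup>2 \<le> (\<Sum>i<?L. (a i - a (Suc i))\<^sup>2) * (\<Sum>i<?L. 1\<^sup>2)"
    using Cauchy_Schwarz_ineq_sum[of "\<lambda>i. a i - a (Suc i)" "\<lambda>_. 1" "{..<?L}"] by simp
  also have "(\<Sum>i<?L. (a i - a (Suc i))\<^sup>2)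
      = (\<Sum>i<?L. (F (x \<otimes> word_prod G (take i ws)) - F (x \<otimes> word_prod G (take i ws) \<otimes> ws ! i))\<^sup>2)"
    by (rule sum.cong) (simp_all add: a_Suc, simp add: a_def)
  finally show ?thesis by (simp add: mult.commute)
qed

context
  assumes generating: "generate G S = carrier G" and infinite: "infinite (carrier G)"
begin

lemma ball_vol_unbounded: "\<exists>n. t < real (ball_vol G S n)"
proof (rule ccontr)
  assume "\<not> ?thesis"
  then have bounded: "real (ball_vol G S n) \<le> t" for n by (simp add: not_less)
  obtain A where A: "A \<subseteq> carrier G" "finite A" "card A = Suc (nat \<lceil>t\<rceil>)"
    using infinite_arbitrarily_large[OF infinite] by blast
  have "\<forall>a\<in>A. \<exists>n. a \<in> cay_ball G S n" using A(1) generating generate_in_cay_ball by blast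
  then obtain N where N: "\<forall>a\<in>A. a \<in> cay_ball G S (N a)" by metis
  have "A \<subseteq> cay_ball G S (Max (N ` A))"
  proof
    fix a assume "a \<in> A"
    then show "a \<in> cay_ball G S (Max (N ` A))"
      using N cay_ball_mono[of "N a"] A(2) by (meson Max_ge finite_imageI imageI subsetD)
  qed
  then have "card A \<le> ball_vol G S (Max (N ` A))"
    unfolding ball_vol_def by (rule card_mono[OF finite_cay_ball])
  then show False using bounded[of "Max (N ` A)"] A(3) by linarith
qed

lemma ball_vol_growth_inv: "t < real (ball_vol G S (growth_inv G S t))"
  unfolding growth_inv_def by (rule LeastI_ex[OF ball_vol_unbounded])

lemma growth_inv_pos: "1 \<le> t \<Longrightarrow> 0 < growth_inv G S t"
  using ball_vol_growth_inv[of t] ball_vol_0 by (cases "growth_inv G S t") auto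

end

end

section \<open>A Faber--Krahn inequality for subgraphs of Cayley graphs\<close>

locale cayley_subgraph = cayley_graph G S + finite_graph V E
  for G (structure) and S and V E +
  assumes V_carrier: "V \<subseteq> carrier G" and cayley_edges: "(x, y) \<in> E \<Longrightarrow> cay_edge G S x y"
begin

lemma edge_gen: "(x, y) \<in> E \<Longrightarrow> \<exists>s\<in>S. y = x \<otimes> s"
  using cayley_edges unfolding cay_edge_def by blast

lemma sum_gens_along_edges:
  assumes x: "x \<in> carrier G"
  shows "(\<Sum>s\<in>{s\<in>S. (x, x \<otimes> s) \<in> E}. h (x \<otimes> s)) = (\<Sum>z\<in>{z. (x, z) \<in> E}. h z)"
proof (rule sum.reindex_cong[symmetric])
  show "inj_on (\<lambda>s. x \<otimes> s) {s\<in>S. (x, x \<otimes> s) \<in> E}"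
    using inj_on_cmult[OF x] S_sub by (auto intro: inj_on_subset)
  show "{z. (x, z) \<in> E} = (\<lambda>s. x \<otimes> s) ` {s\<in>S. (x, x \<otimes> s) \<in> E}"
    using edge_gen by auto
qed simp

lemma card_gens_along_edges: "x \<in> carrier G \<Longrightarrow> card {s\<in>S. (x, x \<otimes> s) \<in> E} = gdeg E x"
  unfolding gdeg_def card_eq_sum using sum_gens_along_edges[of x "\<lambda>_. 1::nat"] by simp

lemma gdeg_le_card_S: "x \<in> carrier G \<Longrightarrow> gdeg E x \<le> card S"
  using card_gens_along_edges[of x] card_mono[OF finite_S, of "{s\<in>S. (x, x \<otimes> s) \<in> E}"] by auto

lemma sum_gens_off_edges:
  assumes "x \<in> carrier G"
  shows "(\<Sum>s\<in>S. if (x, x \<otimes> s) \<notin> E then c else 0) = (real (card S) - real (gdeg E x)) * c"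
proof -
  have "S - {s\<in>S. (x, x \<otimes> s) \<in> E} = {s\<in>S. (x, x \<otimes> s) \<notin> E}" by blast
  then have "real (card {s\<in>S. (x, x \<otimes> s) \<notin> E}) = real (card S) - real (gdeg E x)"
    using card_Diff_subset[of "{s\<in>S. (x, x \<otimes> s) \<in> E}" S] finite_S
      card_gens_along_edges[OF assms] gdeg_le_card_S[OF assms]
    by (simp add: of_nat_diff)
  then show ?thesis using finite_S by (simp add: sum.If_cases Int_def)
qed

lemma sum_gens_restrict:
  assumes "finite U" "V \<subseteq> U" and "\<And>y s. y \<notin> V \<Longrightarrow> H y s = 0"
  shows "(\<Sum>s\<in>S. \<Sum>y\<in>U. H y s) = (\<Sum>y\<in>V. \<Sum>s\<in>S. H y s)"
  by (subst sum.swap) (rule sum.mono_neutral_right[OF assms(1,2)], simp add: assms(3))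

lemma sum_gens_edge_terms:
  assumes "finite U" "V \<subseteq> U"
  shows "(\<Sum>s\<in>S. \<Sum>y\<in>U. if y \<in> V \<and> (y, y \<otimes> s) \<in> E then (f y - f (y \<otimes> s))\<^sup>2 else 0)
    = dirichlet_energy E f"
proof -
  have "(\<Sum>s\<in>S. \<Sum>y\<in>U. if y \<in> V \<and> (y, y \<otimes> s) \<in> E then (f y - f (y \<otimes> s))\<^sup>2 else 0)
      = (\<Sum>y\<in>V. \<Sum>s\<in>{s\<in>S. (y, y \<otimes> s) \<in> E}. (f y - f (y \<otimes> s))\<^sup>2)"
    using finite_S by (subst sum_gens_restrict[OF assms]) (simp_all add: sum.inter_filter)
  also have "\<dots> = (\<Sum>y\<in>V. \<Sum>z\<in>{z. (y, z) \<in> E}. (f y - f z)\<^sup>2)"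
    using V_carrier by (intro sum.cong refl sum_gens_along_edges) auto
  also have "\<dots> = (\<Sum>p\<in>Sigma V (\<lambda>y. {z. (y, z) \<in> E}). (f (fst p) - f (snd p))\<^sup>2)"
    using finite_V E_sub by (subst sum.Sigma) (auto intro: finite_subset simp: case_prod_beta)
  also have "Sigma V (\<lambda>y. {z. (y, z) \<in> E}) = E" using E_sub by auto
  finally show ?thesis unfolding dirichlet_energy_def .
qed

lemma sum_gens_missing_edge_terms:
  assumes "finite U" "V \<subseteq> U"
  shows "(\<Sum>s\<in>S. \<Sum>y\<in>U. if y \<in> V \<and> (y, y \<otimes> s) \<notin> E then g y else 0)
    = (\<Sum>x\<in>V. (real (card S) - real (gdeg E x)) * g x)"
  using V_carrier
  by (subst sum_gens_restrict[OF assms]) (auto intro!: sum.cong simp: sum_gens_off_edges)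

text \<open>The same count seen from the endpoint \<open>z = y s\<close> of a missing edge, using \<open>s \<mapsto> s\<inverse>\<close>.\<close>
lemma sum_gens_missing_edge_terms_target:
  assumes U: "finite U" "U \<subseteq> carrier G" "\<And>z s. z \<in> V \<Longrightarrow> s \<in> S \<Longrightarrow> z \<otimes> inv s \<in> U"
  shows "(\<Sum>s\<in>S. \<Sum>y\<in>U. if y \<otimes> s \<in> V \<and> (y, y \<otimes> s) \<notin> E then g (y \<otimes> s) else 0)
    = (\<Sum>x\<in>V. (real (card S) - real (gdeg E x)) * g x)"
proof -
  have shift: "(\<Sum>y\<in>U. if y \<otimes> s \<in> V \<and> (y, y \<otimes> s) \<notin> E then g (y \<otimes> s) else 0)
      = (\<Sum>z\<in>V. if (z, z \<otimes> inv s) \<notin> E then g z else 0)" if s: "s \<in> S" for s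
  proof -
    have sc: "s \<in> carrier G" using s S_sub by auto
    have "(\<Sum>y\<in>U. if y \<otimes> s \<in> V \<and> (y, y \<otimes> s) \<notin> E then g (y \<otimes> s) else 0)
        = (\<Sum>y\<in>{y\<in>U. y \<otimes> s \<in> V}. if (y, y \<otimes> s) \<notin> E then g (y \<otimes> s) else 0)"
      using U(1) by (simp add: sum.inter_filter[symmetric] conj_ac)
    also have "\<dots> = (\<Sum>z\<in>V. if (z, z \<otimes> inv s) \<notin> E then g z else 0)"
    proof (rule sum.reindex_bij_witness[of _ "\<lambda>z. z \<otimes> inv s" "\<lambda>y. y \<otimes> s"])
      fix y assume "y \<in> {y\<in>U. y \<otimes> s \<in> V}"
      moreover have "(y \<otimes> s, y) \<in> E \<longleftrightarrow> (y, y \<otimes> s) \<in> E" using sym_E by (auto elim: symE)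
      ultimately show "y \<otimes> s \<otimes> inv s = y" "y \<otimes> s \<in> V"
        "(if (y \<otimes> s, y \<otimes> s \<otimes> inv s) \<notin> E then g (y \<otimes> s) else 0)
          = (if (y, y \<otimes> s) \<notin> E then g (y \<otimes> s) else 0)"
        using U(2) sc by (auto simp: m_assoc)
    next
      fix z assume "z \<in> V"
      then show "z \<otimes> inv s \<otimes> s = z" "z \<otimes> inv s \<in> {y\<in>U. y \<otimes> s \<in> V}"
        using U(3) s sc V_carrier by (auto simp: m_assoc)
    qed
    finally show ?thesis .
  qed
  have "(\<Sum>s\<in>S. \<Sum>z\<in>V. if (z, z \<otimes> inv s) \<notin> E then g z else 0)
      = (\<Sum>s\<in>S. \<Sum>z\<in>V. if (z, z \<otimes> s) \<notin> E then g z else 0)"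
    by (rule sum.reindex_bij_witness[of _ "\<lambda>s. inv s" "\<lambda>s. inv s"])
      (use S_inv S_sub in \<open>auto simp: subset_iff\<close>)
  also have "\<dots> = (\<Sum>s\<in>S. \<Sum>y\<in>V. if y \<in> V \<and> (y, y \<otimes> s) \<notin> E then g y else 0)"
    by (intro sum.cong) auto
  also have "\<dots> = (\<Sum>x\<in>V. (real (card S) - real (gdeg E x)) * g x)"
    by (rule sum_gens_missing_edge_terms[OF finite_V order_refl])
  finally show ?thesis using shift by simp
qed

lemma generator_energy_le:
  fixes f :: "'a \<Rightarrow> real"
  assumes U: "finite U" "U \<subseteq> carrier G"
  defines "F \<equiv> \<lambda>x. if x \<in> V then f x else 0"
  shows "(\<Sum>s\<in>S. \<Sum>y\<in>U. (F y - F (y \<otimes> s))\<^sup>2) \<le> 4 * lap_form (\<lambda>_. real (card S)) V E f"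
proof -
  define U' where "U' = U \<union> V \<union> (\<lambda>p. fst p \<otimes> inv (snd p)) ` (V \<times> S)"
  have U': "finite U'" "U' \<subseteq> carrier G" "V \<subseteq> U'"
    unfolding U'_def using U finite_V finite_S V_carrier S_sub by (auto simp: subset_iff)
  have U'_inv: "z \<otimes> inv s \<in> U'" if "z \<in> V" "s \<in> S" for z s
    unfolding U'_def using that by (intro UnI2 image_eqI[where x = "(z, s)"]) auto
  let ?A = "\<lambda>y s. if y \<in> V \<and> (y, y \<otimes> s) \<in> E then (f y - f (y \<otimes> s))\<^sup>2 else 0"
  let ?B = "\<lambda>y s. if y \<in> V \<and> (y, y \<otimes> s) \<notin> E then 2 * (f y)\<^sup>2 else 0"
  let ?C = "\<lambda>y s. if y \<otimes> s \<in> V \<and> (y, y \<otimes> s) \<notin> E then 2 * (f (y \<otimes> s))\<^sup>2 else 0"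
  let ?missing = "\<Sum>x\<in>V. (real (card S) - real (gdeg E x)) * (f x)\<^sup>2"
  have pointwise: "(F y - F (y \<otimes> s))\<^sup>2 \<le> ?A y s + ?B y s + ?C y s" for y s
  proof (cases "(y, y \<otimes> s) \<in> E")
    case True
    then show ?thesis using E_sub by (auto simp: F_def)
  next
    case False
    have "(F y - F (y \<otimes> s))\<^sup>2 \<le> 2 * (F y)\<^sup>2 + 2 * (F (y \<otimes> s))\<^sup>2"
      by (smt (verit) zero_le_power2 power2_sum power2_diff)
    then show ?thesis using False by (simp add: F_def split: if_split_asm)
  qed
  have "(\<Sum>s\<in>S. \<Sum>y\<in>U. (F y - F (y \<otimes> s))\<^sup>2) \<le> (\<Sum>s\<in>S. \<Sum>y\<in>U'. (F y - F (y \<otimes> s))\<^sup>2)"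
    by (intro sum_mono sum_mono2 U'(1)) (auto simp: U'_def)
  also have "\<dots> \<le> (\<Sum>s\<in>S. \<Sum>y\<in>U'. ?A y s) + (\<Sum>s\<in>S. \<Sum>y\<in>U'. ?B y s) + (\<Sum>s\<in>S. \<Sum>y\<in>U'. ?C y s)"
    unfolding sum.distrib[symmetric] by (intro sum_mono pointwise)
  also have "\<dots> = dirichlet_energy E f + 2 * ?missing + 2 * ?missing"
    using sum_gens_edge_terms[OF U'(1,3), of f]
      sum_gens_missing_edge_terms[OF U'(1,3), of "\<lambda>y. 2 * (f y)\<^sup>2"]
      sum_gens_missing_edge_terms_target[OF U'(1,2) U'_inv, of "\<lambda>y. 2 * (f y)\<^sup>2"]
    by (simp add: sum_distrib_left mult_ac)
  also have "\<dots> \<le> 4 * lap_form (\<lambda>_. real (card S)) V E f"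
    using dirichlet_energy_nonneg[of E f] by (simp add: lap_form_eq_energy)
  finally show ?thesis .
qed

lemma lap_A_form_nonneg: "0 \<le> lap_form (\<lambda>_. real (card S)) V E f"
  using gdeg_le_card_S V_carrier dirichlet_energy_nonneg[of E f]
  by (auto simp: lap_form_eq_energy intro!: add_nonneg_nonneg sum_nonneg mult_nonneg_nonneg)

lemma translate_energy_le:
  fixes f :: "'a \<Rightarrow> real"
  assumes W: "finite W" "W \<subseteq> carrier G" and g: "g \<in> cay_ball G S r"
  defines "F \<equiv> \<lambda>x. if x \<in> V then f x else 0"
  shows "(\<Sum>x\<in>W. (F x - F (x \<otimes> g))\<^sup>2) \<le> 4 * (real r)\<^sup>2 * lap_form (\<lambda>_. real (card S)) V E f"
proof -
  let ?Q = "lap_form (\<lambda>_. real (card S)) V E f"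
  obtain ws where ws: "g = word_prod G ws" "set ws \<subseteq> S" "length ws \<le> r"
    using g unfolding cay_ball_def by blast
  let ?L = "length ws"
  define p where "p i = word_prod G (take i ws)" for i
  have p: "p i \<in> carrier G" for i
    unfolding p_def using ws(2) by (meson order_trans set_take_subset word_prod_closed)
  have step: "(\<Sum>x\<in>W. (F (x \<otimes> p i) - F (x \<otimes> p i \<otimes> ws ! i))\<^sup>2) \<le> 4 * ?Q" if i: "i < ?L" for i
  proof -
    have s: "ws ! i \<in> S" using ws(2) i by (meson nth_mem subsetD)
    have inj: "inj_on (\<lambda>x. x \<otimes> p i) W" by (rule inj_on_subset[OF inj_on_multc[OF p] W(2)])
    have "(\<Sum>x\<in>W. (F (x \<otimes> p i) - F (x \<otimes> p i \<otimes> ws ! i))\<^sup>2)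
        = (\<Sum>y\<in>(\<lambda>x. x \<otimes> p i) ` W. (F y - F (y \<otimes> ws ! i))\<^sup>2)"
      by (simp add: sum.reindex[OF inj])
    also have "\<dots> \<le> (\<Sum>s\<in>S. \<Sum>y\<in>(\<lambda>x. x \<otimes> p i) ` W. (F y - F (y \<otimes> s))\<^sup>2)"
      using member_le_sum[OF s, of "\<lambda>s. \<Sum>y\<in>(\<lambda>x. x \<otimes> p i) ` W. (F y - F (y \<otimes> s))\<^sup>2"] finite_S
      by (simp add: sum_nonneg)
    also have "\<dots> \<le> 4 * ?Q"
      unfolding F_def using W p by (intro generator_energy_le) auto
    finally show ?thesis .
  qed
  have "(\<Sum>x\<in>W. (F x - F (x \<otimes> g))\<^sup>2)
      \<le> (\<Sum>x\<in>W. real ?L * (\<Sum>i<?L. (F (x \<otimes> p i) - F (x \<otimes> p i \<otimes> ws ! i))\<^sup>2))"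
    unfolding ws(1) p_def using W(2) by (intro sum_mono sq_diff_word_le[OF ws(2)]) auto
  also have "\<dots> = real ?L * (\<Sum>i<?L. \<Sum>x\<in>W. (F (x \<otimes> p i) - F (x \<otimes> p i \<otimes> ws ! i))\<^sup>2)"
    by (simp add: sum_distrib_left[symmetric] sum.swap[of _ W])
  also have "\<dots> \<le> real ?L * (\<Sum>i<?L. 4 * ?Q)"
    by (intro mult_left_mono sum_mono step) auto
  also have "\<dots> = 4 * (real ?L)\<^sup>2 * ?Q" by (simp add: power2_eq_square)
  also have "\<dots> \<le> 4 * (real r)\<^sup>2 * ?Q"
    using ws(3) lap_A_form_nonneg by (intro mult_right_mono) auto
  finally show ?thesis .
qed

lemma translate_energy_eq:
  fixes f :: "'a \<Rightarrow> real"
  assumes W: "finite W" "W \<subseteq> carrier G" "V \<subseteq> W"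
    and g: "g \<in> carrier G" "\<And>v. v \<in> V \<Longrightarrow> v \<otimes> inv g \<in> W"
  defines "F \<equiv> \<lambda>x. if x \<in> V then f x else 0"
  shows "(\<Sum>x\<in>W. (F x - F (x \<otimes> g))\<^sup>2) = 2 * l2_inner V f f - 2 * (\<Sum>x\<in>V. f x * F (x \<otimes> g))"
proof -
  have restrict: "(\<Sum>x\<in>W. F x * h x) = (\<Sum>x\<in>V. f x * h x)" for h
    by (subst sum.mono_neutral_right[OF W(1,3)]) (auto simp: F_def)
  have "(\<Sum>x\<in>W. (F (x \<otimes> g))\<^sup>2) = (\<Sum>y\<in>(\<lambda>x. x \<otimes> g) ` W. (F y)\<^sup>2)"
    by (simp add: sum.reindex[OF inj_on_subset[OF inj_on_multc[OF g(1)] W(2)]])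
  also have "\<dots> = (\<Sum>y\<in>V. (F y)\<^sup>2)"
  proof (rule sum.mono_neutral_right)
    show "V \<subseteq> (\<lambda>x. x \<otimes> g) ` W"
    proof
      fix v assume "v \<in> V"
      then have "v = v \<otimes> inv g \<otimes> g" "v \<otimes> inv g \<in> W" using V_carrier g by (auto simp: m_assoc)
      then show "v \<in> (\<lambda>x. x \<otimes> g) ` W" by blast
    qed
  qed (use W in \<open>auto simp: F_def\<close>)
  finally have "(\<Sum>x\<in>W. (F (x \<otimes> g))\<^sup>2) = l2_inner V f f"
    by (simp add: F_def l2_inner_def power2_eq_square)
  moreover have "(\<Sum>x\<in>W. (F x)\<^sup>2) = l2_inner V f f"
    using restrict[of F] by (simp add: F_def l2_inner_def power2_eq_square)
  moreover have "(\<Sum>x\<in>W. (F x - F (x \<otimes> g))\<^sup>2)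
      = (\<Sum>x\<in>W. (F x)\<^sup>2) + (\<Sum>x\<in>W. (F (x \<otimes> g))\<^sup>2) - 2 * (\<Sum>x\<in>W. F x * F (x \<otimes> g))"
    by (simp add: power2_diff sum.distrib sum_subtractf sum_distrib_left mult.assoc)
  ultimately show ?thesis using restrict[of "\<lambda>x. F (x \<otimes> g)"] by simp
qed

text \<open>Each \<open>x \<in> V\<close> sees every point of \<open>V\<close> at most once among its translates \<open>x g\<close>, so the sum is
  at most \<open>(\<Sum>\<bar>f\<bar>)\<^sup>2 \<le> |V| \<parallel>f\<parallel>\<^sup>2\<close>.\<close>
lemma sum_translates_le:
  fixes f :: "'a \<Rightarrow> real"
  assumes T: "finite T" "T \<subseteq> carrier G"
  defines "F \<equiv> \<lambda>x. if x \<in> V then f x else 0"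
  shows "(\<Sum>g\<in>T. \<Sum>x\<in>V. f x * F (x \<otimes> g)) \<le> real (card V) * l2_inner V f f"
proof -
  define \<sigma> where "\<sigma> = (\<Sum>y\<in>V. \<bar>f y\<bar>)"
  have bound: "\<bar>\<Sum>g\<in>T. F (x \<otimes> g)\<bar> \<le> \<sigma>" if x: "x \<in> V" for x
  proof -
    have inj: "inj_on (\<lambda>g. x \<otimes> g) T"
      using x V_carrier by (intro inj_on_subset[OF inj_on_cmult T(2)]) auto
    have "\<bar>\<Sum>g\<in>T. F (x \<otimes> g)\<bar> \<le> (\<Sum>y\<in>(\<lambda>g. x \<otimes> g) ` T. \<bar>F y\<bar>)"
      using sum_abs[of "\<lambda>g. F (x \<otimes> g)" T] by (simp add: sum.reindex[OF inj])
    also have "\<dots> \<le> (\<Sum>y\<in>(\<lambda>g. x \<otimes> g) ` T \<union> V. \<bar>F y\<bar>)"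
      using T finite_V by (intro sum_mono2) auto
    also have "\<dots> = (\<Sum>y\<in>V. \<bar>F y\<bar>)"
      using T finite_V by (intro sum.mono_neutral_right) (auto simp: F_def)
    also have "\<dots> = \<sigma>" by (simp add: \<sigma>_def F_def)
    finally show ?thesis .
  qed
  have "(\<Sum>g\<in>T. \<Sum>x\<in>V. f x * F (x \<otimes> g)) = (\<Sum>x\<in>V. f x * (\<Sum>g\<in>T. F (x \<otimes> g)))"
    by (simp add: sum_distrib_left sum.swap[of _ T])
  also have "\<dots> \<le> (\<Sum>x\<in>V. \<bar>f x\<bar> * \<sigma>)"
    using bound by (intro sum_mono) (metis abs_ge_self abs_ge_zero abs_mult mult_left_mono order_trans)
  also have "\<dots> = (\<Sum>y\<in>V. \<bar>f y\<bar> * 1)\<^sup>2" by (simp add: \<sigma>_def sum_distrib_right power2_eq_square)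
  also have "\<dots> \<le> (\<Sum>y\<in>V. \<bar>f y\<bar>\<^sup>2) * (\<Sum>y\<in>V. 1\<^sup>2)" by (rule Cauchy_Schwarz_ineq_sum)
  also have "\<dots> = real (card V) * l2_inner V f f" by (simp add: l2_inner_def power2_eq_square)
  finally show ?thesis .
qed

text \<open>Average \<open>\<Sum>\<^sub>x (F x - F (x g))\<^sup>2\<close> over \<open>g \<in> B(r)\<close>: each term is at most
  \<open>4 r\<^sup>2 \<langle>f, \<Delta>\<^sup>A f\<rangle>\<close>, while the average is at least \<open>\<parallel>f\<parallel>\<^sup>2\<close> because \<open>B(r)\<close> has at least twice
  as many elements as \<open>V\<close>.\<close>
lemma faber_krahn:
  assumes vol: "2 * real (card V) \<le> real (ball_vol G S r)"
  shows "l2_inner V f f \<le> 4 * (real r)\<^sup>2 * lap_form (\<lambda>_. real (card S)) V E f"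
proof -
  let ?F = "\<lambda>x. if x \<in> V then f x else 0"
  let ?Q = "lap_form (\<lambda>_. real (card S)) V E f"
  define T where "T = cay_ball G S r"
  define W where "W = (\<lambda>p. fst p \<otimes> inv (snd p)) ` (V \<times> T)"
  have T: "finite T" "T \<subseteq> carrier G" "card T = ball_vol G S r"
    unfolding T_def ball_vol_def using finite_cay_ball cay_ball_carrier by auto
  have W: "finite W" "W \<subseteq> carrier G"
    unfolding W_def using T finite_V V_carrier by (auto simp: subset_iff)
  have VW: "V \<subseteq> W"
  proof
    fix v assume "v \<in> V"
    then have "(v, \<one>) \<in> V \<times> T" "v = v \<otimes> inv \<one>"
      using V_carrier one_in_cay_ball by (auto simp: T_def)
    then show "v \<in> W" unfolding W_def by force
  qed
  have inv_W: "v \<otimes> inv g \<in> W" if "v \<in> V" "g \<in> T" for v g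
    unfolding W_def using that by (intro image_eqI[where x = "(v, g)"]) auto
  have "real (card T) * (2 * l2_inner V f f) - real (card V) * (2 * l2_inner V f f)
      \<le> (\<Sum>g\<in>T. 2 * l2_inner V f f - 2 * (\<Sum>x\<in>V. f x * ?F (x \<otimes> g)))"
    using sum_translates_le[OF T(1,2), of f] by (simp add: sum_subtractf sum_distrib_left[symmetric])
  also have "\<dots> = (\<Sum>g\<in>T. \<Sum>x\<in>W. (?F x - ?F (x \<otimes> g))\<^sup>2)"
    using W VW inv_W T(2) by (intro sum.cong refl translate_energy_eq[symmetric]) auto
  also have "\<dots> \<le> (\<Sum>g\<in>T. 4 * (real r)\<^sup>2 * ?Q)"
    using W by (intro sum_mono translate_energy_le) (auto simp: T_def)
  finally have "real (card T) * (2 * l2_inner V f f) - real (card V) * (2 * l2_inner V f f)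
      \<le> real (card T) * (4 * (real r)\<^sup>2 * ?Q)" by simp
  moreover have "2 * real (card V) * l2_inner V f f \<le> real (card T) * l2_inner V f f"
    using vol T(3) l2_inner_self_nonneg by (intro mult_right_mono) auto
  ultimately have "real (card T) * l2_inner V f f \<le> real (card T) * (4 * (real r)\<^sup>2 * ?Q)"
    by (simp add: algebra_simps)
  moreover have "0 < card T" using T(3) ball_vol_pos by simp
  ultimately show ?thesis by simp
qed

end

section \<open>Bounds on the lowest non-zero eigenvalues\<close>

context finite_graph
begin

lemma lap_N_lowest_nz_eig_ge:
  assumes conn: "graph_connected V E"
    and nonzero: "\<exists>\<mu>. is_eigenvalue V (lap_N V E) \<mu> \<and> \<mu> \<noteq> 0"
  shows "1 / real (card V) ^ 2 \<le> lowest_nz_eig V (lap_N V E)"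
  using nonzero lap_N_eigenvalue_ge[OF conn] unfolding lap_N_eq_wlap
  by (intro lowest_nz_eig_ge) auto

end

context cayley_subgraph
begin

lemma card_E_le: "card E \<le> card S * card V"
proof -
  have "E \<subseteq> (\<lambda>p. (fst p, fst p \<otimes> snd p)) ` (V \<times> S)"
  proof
    fix p assume p: "p \<in> E"
    then obtain s where "s \<in> S" "snd p = fst p \<otimes> s" using edge_gen[of "fst p" "snd p"] by auto
    moreover have "fst p \<in> V" using p E_sub by auto
    ultimately show "p \<in> (\<lambda>p. (fst p, fst p \<otimes> snd p)) ` (V \<times> S)"
      by (intro image_eqI[where x = "(fst p, s)"]) (simp_all add: prod_eq_iff)
  qed
  then have "card E \<le> card (V \<times> S)"
    using finite_V finite_S by (meson card_image_le card_mono finite_SigmaI finite_imageI order_trans)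
  then show ?thesis by (simp add: card_cartesian_product mult.commute)
qed

lemma lap_A_form_le_lap_D_form:
  "lap_form (\<lambda>_. real (card S)) V E f \<le> lap_form (\<lambda>x. 2 * real (card S) - real (gdeg E x)) V E f"
  using gdeg_le_card_S V_carrier
  by (auto simp: lap_form_eq_energy intro!: sum_mono mult_right_mono)

context
  assumes generating: "generate G S = carrier G" and infinite: "infinite (carrier G)"
begin

lemma lap_A_form_coercive:
  assumes "V \<noteq> {}"
  defines "r \<equiv> growth_inv G S (2 * real (card V))"
  shows "0 < r" and "1 / (4 * real r ^ 2) * l2_inner V f f \<le> lap_form (\<lambda>_. real (card S)) V E f"
proof -
  have "0 < card V" using assms finite_V by (simp add: card_gt_0_iff)
  then show "0 < r" unfolding r_def by (intro growth_inv_pos[OF generating infinite]) simp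
  have "2 * real (card V) \<le> real (ball_vol G S r)"
    unfolding r_def using ball_vol_growth_inv[OF generating infinite] by (simp add: less_imp_le)
  from faber_krahn[OF this, of f] \<open>0 < r\<close>
  show "1 / (4 * real r ^ 2) * l2_inner V f f \<le> lap_form (\<lambda>_. real (card S)) V E f"
    by (simp add: field_simps)
qed

lemma lap_A_lowest_nz_eig_ge:
  assumes "V \<noteq> {}"
  shows "(1 / 4) / real (growth_inv G S (2 * real (card V))) ^ 2 \<le> lowest_nz_eig V (lap_A (card S) V E)"
  using lowest_nz_eig_coercive(1)[OF assms _ lap_A_form_coercive(2)[OF assms]]
    lap_A_form_coercive(1)[OF assms]
  by (simp add: lap_A_eq_wlap)

end

end

context cayley_graph
begin

lemma is_subgraph_induced_edges: "W \<subseteq> carrier G \<Longrightarrow> is_subgraph G S W (induced_edges G S W)"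
  unfolding is_subgraph_def induced_edges_def cay_edge_def
proof (safe, simp_all)
  fix x s assume "x \<in> W" "x \<otimes> s \<in> W" "x \<in> carrier G" "s \<in> S"
  then show "\<exists>t\<in>S. x = x \<otimes> s \<otimes> t"
    using S_inv S_sub by (intro bexI[of _ "inv s"]) (auto simp: m_assoc)
qed

lemma cayley_subgraph_if_is_subgraph:
  "is_subgraph G S V E \<Longrightarrow> finite V \<Longrightarrow> cayley_subgraph G S V E"
  unfolding cayley_subgraph_def cayley_subgraph_axioms_def finite_graph_def is_subgraph_def sym_def
  using cayley_graph_axioms by auto

lemma cayley_subgraph_cay_ball:
  "cayley_subgraph G S (cay_ball G S n) (induced_edges G S (cay_ball G S n))"
  by (intro cayley_subgraph_if_is_subgraph is_subgraph_induced_edges cay_ball_carrier finite_cay_ball)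

definition word_length :: "'a \<Rightarrow> nat" where
  "word_length x = (LEAST l. x \<in> cay_ball G S l)"

lemma word_length_le: "x \<in> cay_ball G S l \<Longrightarrow> word_length x \<le> l"
  unfolding word_length_def by (rule Least_le)

lemma in_cay_ball_word_length: "x \<in> cay_ball G S l \<Longrightarrow> x \<in> cay_ball G S (word_length x)"
  unfolding word_length_def by (rule LeastI)

lemma word_length_mult_gen: "x \<in> cay_ball G S l \<Longrightarrow> s \<in> S \<Longrightarrow> word_length (x \<otimes> s) \<le> Suc (word_length x)"
  by (rule word_length_le[OF mult_gen_in_cay_ball[OF in_cay_ball_word_length]])

lemma gdeg_cay_ball_interior:
  assumes x: "x \<in> cay_ball G S n" and "word_length x < n"
  shows "gdeg (induced_edges G S (cay_ball G S n)) x = card S"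
proof -
  interpret B: cayley_subgraph G S "cay_ball G S n" "induced_edges G S (cay_ball G S n)"
    by (rule cayley_subgraph_cay_ball)
  have xc: "x \<in> carrier G" using x cay_ball_carrier by auto
  have "x \<otimes> s \<in> cay_ball G S n" if "s \<in> S" for s
    using cay_ball_mono[of "Suc (word_length x)" n] mult_gen_in_cay_ball[OF in_cay_ball_word_length[OF x] that]
      assms(2) by auto
  then have "{s\<in>S. (x, x \<otimes> s) \<in> induced_edges G S (cay_ball G S n)} = S"
    using x xc S_sub by (auto simp: induced_edges_def cay_edge_def)
  then show ?thesis using B.card_gens_along_edges[OF xc] by simp
qed

text \<open>The test function \<open>n - |x|\<close> on \<open>B(n)\<close>: it changes by at most one along edges, and
  vanishes where the ball has boundary, i.e. where \<open>2k - D - D\<close> can be negative.\<close>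
lemma lap_D_form_ball_distance_le:
  fixes n :: nat
  defines "B \<equiv> cay_ball G S n" and "f \<equiv> \<lambda>x. real n - real (word_length x)"
  shows "lap_form (\<lambda>x. 2 * real (card S) - real (gdeg (induced_edges G S B) x)) B (induced_edges G S B) f
    \<le> real (card S) * real (ball_vol G S n) / 2"
proof -
  interpret B: cayley_subgraph G S B "induced_edges G S B"
    unfolding B_def by (rule cayley_subgraph_cay_ball)
  let ?E = "induced_edges G S B"
  have interior: "(2 * real (card S) - real (gdeg ?E x) - real (gdeg ?E x)) * (f x)\<^sup>2 \<le> 0"
    if x: "x \<in> B" for x
  proof (cases "word_length x < n")
    case True
    then show ?thesis using gdeg_cay_ball_interior[of x n] x by (simp add: B_def)
  next
    case False
    then show ?thesis using word_length_le[of x n] x by (simp add: B_def f_def)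
  qed
  have lipschitz: "(f a - f b)\<^sup>2 \<le> 1" if ab: "(a, b) \<in> ?E" for a b
  proof -
    obtain s where s: "s \<in> S" "b = a \<otimes> s" and a: "a \<in> B" "a \<in> carrier G" and b: "b \<in> B"
      using ab B.edge_gen B.E_sub B.V_carrier by blast
    have "a = b \<otimes> inv s" using s a S_sub by (auto simp: m_assoc)
    then have "word_length a \<le> Suc (word_length b)"
      using word_length_mult_gen[of b n "inv s"] b s S_inv by (simp add: B_def)
    moreover have "word_length b \<le> Suc (word_length a)"
      using word_length_mult_gen[of a n s] a s by (simp add: B_def)
    ultimately have "\<bar>f a - f b\<bar> \<le> 1" unfolding f_def by linarith
    then show ?thesis by (simp add: abs_square_le_1)
  qed
  have "lap_form (\<lambda>x. 2 * real (card S) - real (gdeg ?E x)) B ?E f \<le> dirichlet_energy ?E f / 2"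
    unfolding B.lap_form_eq_energy using interior by (simp add: sum_nonpos)
  also have "\<dots> \<le> real (card ?E) / 2"
    using lipschitz sum_mono[of ?E "\<lambda>p. (f (fst p) - f (snd p))\<^sup>2" "\<lambda>_. 1"]
    by (auto simp: dirichlet_energy_def)
  also have "\<dots> \<le> real (card S) * real (ball_vol G S n) / 2"
    using B.card_E_le by (simp add: B_def ball_vol_def flip: of_nat_mult)
  finally show ?thesis .
qed

lemma l2_norm_ball_distance_ge:
  fixes n :: nat
  defines "f \<equiv> \<lambda>x. real n - real (word_length x)"
  shows "real (ball_vol G S (n div 2)) * (real n / 2)\<^sup>2 \<le> l2_inner (cay_ball G S n) f f"
proof -
  have "real (ball_vol G S (n div 2)) * (real n / 2)\<^sup>2 = (\<Sum>x\<in>cay_ball G S (n div 2). (real n / 2)\<^sup>2)"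
    by (simp add: ball_vol_def)
  also have "\<dots> \<le> (\<Sum>x\<in>cay_ball G S (n div 2). (f x)\<^sup>2)"
  proof (rule sum_mono)
    fix x assume "x \<in> cay_ball G S (n div 2)"
    then have "real n / 2 \<le> f x" using word_length_le[of x "n div 2"] unfolding f_def by linarith
    then show "(real n / 2)\<^sup>2 \<le> (f x)\<^sup>2" by (rule power_mono) simp
  qed
  also have "\<dots> \<le> (\<Sum>x\<in>cay_ball G S n. (f x)\<^sup>2)"
    by (intro sum_mono2 finite_cay_ball cay_ball_mono) auto
  finally show ?thesis by (simp add: l2_inner_def power2_eq_square)
qed

context
  assumes generating: "generate G S = carrier G" and infinite: "infinite (carrier G)"
begin

lemma S_nonempty: "S \<noteq> {}"
proof
  assume "S = {}"
  then have "carrier G = {\<one>}" using generating generate_empty by simp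
  then show False using infinite by simp
qed

lemma lap_D_ball_lowest_nz_eig_le:
  assumes "0 < n"
  shows "lowest_nz_eig (cay_ball G S n) (lap_D (card S) (cay_ball G S n) (induced_edges G S (cay_ball G S n)))
    \<le> 2 * real (card S) * real (ball_vol G S n) / (real n ^ 2 * real (ball_vol G S (n div 2)))"
proof -
  let ?B = "cay_ball G S n" and ?E = "induced_edges G S (cay_ball G S n)"
  let ?wD = "\<lambda>x. 2 * real (card S) - real (gdeg ?E x)"
  let ?f = "\<lambda>x. real n - real (word_length x)"
  let ?lam = "lowest_nz_eig ?B (wlap ?wD ?B ?E)"
  interpret B: cayley_subgraph G S ?B ?E by (rule cayley_subgraph_cay_ball)
  have "?B \<noteq> {}" using one_in_cay_ball by blast
  note coercive = B.lap_A_form_coercive[OF generating infinite this]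
  let ?c = "1 / (4 * real (growth_inv G S (2 * real (card ?B))) ^ 2)"
  have "0 < ?c" using coercive(1) by simp
  have coercive_D: "?c * l2_inner ?B f f \<le> lap_form ?wD ?B ?E f" for f
    using coercive(2) B.lap_A_form_le_lap_D_form order_trans by blast
  have "?c \<le> ?lam" by (rule B.lowest_nz_eig_coercive(1)[OF \<open>?B \<noteq> {}\<close> \<open>0 < ?c\<close> coercive_D])
  then have "0 < ?lam" using \<open>0 < ?c\<close> by linarith
  then have "?lam * (real (ball_vol G S (n div 2)) * (real n / 2)\<^sup>2) \<le> ?lam * l2_inner ?B ?f ?f"
    by (intro mult_left_mono l2_norm_ball_distance_ge) auto
  also have "\<dots> \<le> lap_form ?wD ?B ?E ?f"
    by (rule B.lowest_nz_eig_coercive(2)[OF \<open>?B \<noteq> {}\<close> \<open>0 < ?c\<close> coercive_D])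
  also have "\<dots> \<le> real (card S) * real (ball_vol G S n) / 2"
    by (rule lap_D_form_ball_distance_le)
  finally show ?thesis
    using ball_vol_pos[of "n div 2"] \<open>0 < n\<close>
    by (simp add: lap_D_eq_wlap field_simps power2_eq_square)
qed

end

end

lemma sum_indices: "(\<Sum>i<n. real i) = real n * (real n - 1) / 2"
  by (induction n) (simp_all add: field_simps)

lemma sum_centered_indices: "(\<Sum>i<n. real i - (real n - 1) / 2) = 0"
proof -
  have "(\<Sum>i<n. real i - (real n - 1) / 2) = (\<Sum>i<n. real i) - real n * ((real n - 1) / 2)"
    by (simp add: sum_subtractf)
  then show ?thesis unfolding sum_indices by simp
qed

lemma sum_sq_centered_indices:
  "(\<Sum>i<n. (real i - (real n - 1) / 2)\<^sup>2) = real n * (real n - 1) * (real n + 1) / 12"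
proof -
  let ?c = "(real n - 1) / 2"
  have sum_sq: "(\<Sum>i<n. (real i)\<^sup>2) = (real n - 1) * real n * (2 * real n - 1) / 6"
    by (induction n) (simp_all add: field_simps power2_eq_square)
  have "(\<Sum>i<n. (real i - ?c)\<^sup>2) = (\<Sum>i<n. (real i)\<^sup>2 - (2 * ?c) * real i + ?c\<^sup>2)"
    by (rule sum.cong) (simp_all add: power2_diff algebra_simps)
  also have "\<dots> = (\<Sum>i<n. (real i)\<^sup>2) - (2 * ?c) * (\<Sum>i<n. real i) + real n * ?c\<^sup>2"
    by (simp add: sum.distrib sum_subtractf sum_distrib_left)
  finally show ?thesis unfolding sum_indices sum_sq by (simp add: field_simps power2_eq_square)
qed

lemma sum_set_distinct_nth:
  assumes "distinct xs" shows "(\<Sum>v\<in>set xs. h v) = (\<Sum>i<length xs. h (xs ! i))"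
proof -
  have "set xs = (!) xs ` {..<length xs}" by (auto simp: set_conv_nth)
  then show ?thesis using inj_on_nth[OF assms, of "{..<length xs}"] by (simp add: sum.reindex)
qed

lemma path_graph_edges:
  assumes "distinct xs" "length xs = n"
    and "E = {(xs ! i, xs ! Suc i) | i. Suc i < n} \<union> {(xs ! Suc i, xs ! i) | i. Suc i < n}"
  shows "finite_graph (set xs) E" and "0 < n \<Longrightarrow> graph_connected (set xs) E"
proof -
  show "finite_graph (set xs) E"
    unfolding finite_graph_def sym_def using assms by auto
  have walk: "(xs ! i, xs ! (i + k)) \<in> E\<^sup>* \<and> (xs ! (i + k), xs ! i) \<in> E\<^sup>*" if "i + k < n" for i k
    using that
  proof (induction k)
    case (Suc k)
    then have "(xs ! (i + k), xs ! Suc (i + k)) \<in> E" "(xs ! Suc (i + k), xs ! (i + k)) \<in> E"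
      unfolding assms(3) by auto
    with Suc show ?case by (auto intro: rtrancl_into_rtrancl converse_rtrancl_into_rtrancl)
  qed simp
  have "(xs ! i, xs ! j) \<in> E\<^sup>*" if "i < n" "j < n" for i j
    using walk[of i "j - i"] walk[of j "i - j"] that by (cases "i \<le> j") simp_all
  moreover assume "0 < n"
  ultimately show "graph_connected (set xs) E"
    unfolding graph_connected_def using assms(2) by (auto simp: set_conv_nth)
qed

lemma path_graph_centred_position:
  assumes xs: "distinct xs" "length xs = n"
    and E: "E = {(xs ! i, xs ! Suc i) | i. Suc i < n} \<union> {(xs ! Suc i, xs ! i) | i. Suc i < n}"
  defines "f \<equiv> \<lambda>v. real (inv_into {..<n} ((!) xs) v) - (real n - 1) / 2"
  shows "l2_inner (set xs) (\<lambda>_. 1) f = 0"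
    and "l2_inner (set xs) f f = real n * (real n - 1) * (real n + 1) / 12"
    and "0 < n \<Longrightarrow> dirichlet_energy E f \<le> 2 * (real n - 1)"
proof -
  have f_nth: "f (xs ! i) = real i - (real n - 1) / 2" if "i < n" for i
    unfolding f_def using inv_into_f_f[OF inj_on_nth[OF xs(1)]] xs(2) that by auto
  show "l2_inner (set xs) (\<lambda>_. 1) f = 0"
    using sum_centered_indices[of n] xs by (simp add: l2_inner_def sum_set_distinct_nth f_nth)
  show "l2_inner (set xs) f f = real n * (real n - 1) * (real n + 1) / 12"
    using sum_sq_centered_indices[of n] xs
    by (simp add: l2_inner_def sum_set_distinct_nth f_nth power2_eq_square)
  let ?h = "\<lambda>p. (f (fst p) - f (snd p))\<^sup>2"
  define A where "A = (\<lambda>i. (xs ! i, xs ! Suc i)) ` {..<n - 1}"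
  define B where "B = (\<lambda>i. (xs ! Suc i, xs ! i)) ` {..<n - 1}"
  have "E = A \<union> B" unfolding E A_def B_def by force
  have "sum ?h (A \<union> B) \<le> sum ?h A + sum ?h B"
    using sum.union_inter[of A B ?h] sum_nonneg[of "A \<inter> B" ?h] by (simp add: A_def B_def)
  also have "\<dots> \<le> (\<Sum>i<n - 1. 1) + (\<Sum>i<n - 1. 1)"
    unfolding A_def B_def
    by (intro add_mono order_trans[OF sum_image_le] sum_mono) (auto simp: f_nth)
  finally show "0 < n \<Longrightarrow> dirichlet_energy E f \<le> 2 * (real n - 1)"
    using \<open>E = A \<union> B\<close> unfolding dirichlet_energy_def by simp
qed

lemma lap_N_path_lowest_nz_eig_le:
  assumes path: "is_path_graph V E n"
    and nonzero: "\<exists>\<mu>. is_eigenvalue V (lap_N V E) \<mu> \<and> \<mu> \<noteq> 0"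
  shows "lowest_nz_eig V (lap_N V E) \<le> 12 / real n ^ 2"
proof -
  obtain xs where xs: "distinct xs" "length xs = n" "V = set xs"
    and E: "E = {(xs ! i, xs ! Suc i) | i. Suc i < n} \<union> {(xs ! Suc i, xs ! i) | i. Suc i < n}"
    using path unfolding is_path_graph_def by blast
  interpret finite_graph V E using path_graph_edges(1)[OF xs(1,2) E] xs(3) by simp
  have "2 \<le> n"
  proof (rule ccontr)
    assume "\<not> 2 \<le> n"
    then have "E = {}" unfolding E by auto
    then have "lap_N V E u x = 0" for u x by (simp add: lap_N_def adj_op_def gdeg_def)
    then show False using nonzero by (auto simp: is_eigenvalue_def)
  qed
  have card_V: "card V = n" using xs by (simp add: distinct_card)
  have conn: "graph_connected V E" using path_graph_edges(2)[OF xs(1,2) E] xs(3) \<open>2 \<le> n\<close> by simp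
  let ?w = "\<lambda>x. real (gdeg E x)" and ?lam = "lowest_nz_eig V (lap_N V E)"
  let ?f = "\<lambda>v. real (inv_into {..<n} ((!) xs) v) - (real n - 1) / 2"
  note f = path_graph_centred_position[OF xs(1,2) E, folded xs(3)]
  have "?lam * l2_inner V ?f ?f \<le> lap_form ?w V E ?f"
  proof (rule lowest_nz_eig_le_rayleigh_orth_const[where c = "1 / real n ^ 2" and w = ?w,
        folded lap_N_eq_wlap])
    show "xs ! 0 \<in> V" "xs ! 1 \<in> V" "xs ! 0 \<noteq> xs ! 1"
      using xs \<open>2 \<le> n\<close> by (auto simp: nth_eq_iff_index_eq)
    show "1 / real n ^ 2 * l2_inner V g g \<le> lap_form ?w V E g" if "l2_inner V (\<lambda>_. 1) g = 0" for g
      using poincare_inequality[OF conn that] \<open>2 \<le> n\<close> by (simp add: card_V lap_N_form_eq field_simps)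
  qed (use f(1) lap_N_const_one \<open>2 \<le> n\<close> in \<open>auto simp: lap_N_eq_wlap\<close>)
  also have "\<dots> \<le> real n - 1" using f(3) \<open>2 \<le> n\<close> by (simp add: lap_N_form_eq)
  finally have "(real n - 1) * (?lam * (real n * (real n + 1))) \<le> (real n - 1) * 12"
    unfolding f(2) by (simp add: field_simps)
  moreover have "0 < real n - 1" using \<open>2 \<le> n\<close> by simp
  ultimately have "?lam * (real n * (real n + 1)) \<le> 12" by (simp only: mult_le_cancel_left_pos)
  have "0 < 1 / real (card V) ^ 2" using card_V \<open>2 \<le> n\<close> by simp
  then have "0 < ?lam" using lap_N_lowest_nz_eig_ge[OF conn nonzero] by linarith
  then have "?lam * real n ^ 2 \<le> ?lam * (real n * (real n + 1))"
    by (intro mult_left_mono) (auto simp: power2_eq_square algebra_simps)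
  then show ?thesis
    using \<open>?lam * (real n * (real n + 1)) \<le> 12\<close> \<open>2 \<le> n\<close> by (simp add: field_simps)
qed

theorem proposition3p5:
  fixes G :: "('a, 'b) monoid_scheme" and S :: "'a set"
  assumes grp: "group G"
    and S_sub: "S \<subseteq> carrier G"
    and S_fin: "finite S"
    and S_sym: "\<forall>s\<in>S. inv\<^bsub>G\<^esub> s \<in> S"
    and S_id: "\<one>\<^bsub>G\<^esub> \<notin> S"
    and S_gen: "generate G S = carrier G"
    and G_inf: "infinite (carrier G)"
  shows "\<exists>\<alpha>D \<beta>D \<gamma>D \<alpha>N \<gamma>N :: real.
           \<alpha>D > 0 \<and> \<beta>D > 0 \<and> \<gamma>D > 0 \<and> \<alpha>N > 0 \<and> \<gamma>N > 0 \<and>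
           (\<forall>V' E'. is_subgraph G S V' E' \<and> finite V' \<and> graph_connected V' E' \<longrightarrow>
              lowest_nz_eig V' (lap_A (card S) V' E')
                \<ge> \<alpha>D / real (growth_inv G S (\<beta>D * real (card V'))) ^ 2
            \<and> ((\<exists>\<mu>. is_eigenvalue V' (lap_N V' E') \<mu> \<and> \<mu> \<noteq> 0) \<longrightarrow>
                 lowest_nz_eig V' (lap_N V' E') \<ge> \<alpha>N / real (card V') ^ 2)) \<and>
           (\<forall>n::nat. n > 0 \<longrightarrow>
              lowest_nz_eig (cay_ball G S n) (lap_D (card S) (cay_ball G S n) (induced_edges G S (cay_ball G S n)))
                \<le> \<gamma>D * real (ball_vol G S n) / (real n ^ 2 * real (ball_vol G S (n div 2)))) \<and>
           (\<forall>n::nat. \<forall>V' E'. n > 0 \<and> is_subgraph G S V' E' \<and> is_path_graph V' E' n \<and>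
              (\<exists>\<mu>. is_eigenvalue V' (lap_N V' E') \<mu> \<and> \<mu> \<noteq> 0) \<longrightarrow>
              lowest_nz_eig V' (lap_N V' E') \<le> \<gamma>N / real n ^ 2)"
proof -
  interpret cayley_graph G S
    using grp S_sub S_fin S_sym by (simp add: cayley_graph_def cayley_graph_axioms_def)
  have "0 < card S" using S_nonempty[OF S_gen G_inf] S_fin by (simp add: card_gt_0_iff)
  have subgraph_bounds:
    "(1 / 4) / real (growth_inv G S (2 * real (card V'))) ^ 2 \<le> lowest_nz_eig V' (lap_A (card S) V' E')"
    "(\<exists>\<mu>. is_eigenvalue V' (lap_N V' E') \<mu> \<and> \<mu> \<noteq> 0) \<Longrightarrow>
      1 / real (card V') ^ 2 \<le> lowest_nz_eig V' (lap_N V' E')"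
    if "is_subgraph G S V' E'" "finite V'" and conn: "graph_connected V' E'" for V' E'
  proof -
    interpret cayley_subgraph G S V' E' using that by (intro cayley_subgraph_if_is_subgraph)
    show "(1 / 4) / real (growth_inv G S (2 * real (card V'))) ^ 2 \<le> lowest_nz_eig V' (lap_A (card S) V' E')"
      using lap_A_lowest_nz_eig_ge[OF S_gen G_inf] conn by (simp add: graph_connected_def)
    show "(\<exists>\<mu>. is_eigenvalue V' (lap_N V' E') \<mu> \<and> \<mu> \<noteq> 0) \<Longrightarrow>
        1 / real (card V') ^ 2 \<le> lowest_nz_eig V' (lap_N V' E')"
      by (rule lap_N_lowest_nz_eig_ge[OF conn])
  qed
  show ?thesis
    by (rule exI[of _ "1 / 4"], rule exI[of _ 2], rule exI[of _ "2 * real (card S)"],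
        rule exI[of _ 1], rule exI[of _ 12])
      (use \<open>0 < card S\<close> subgraph_bounds lap_D_ball_lowest_nz_eig_le[OF S_gen G_inf]
        lap_N_path_lowest_nz_eig_le in \<open>simp, blast\<close>)
qed

end
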